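(* Let $G$ be a hierarchical configuration model satisfying the Community regularity condition and the Inter-community connectivity condition (stated in the context), explored by the community exploration process described in the context, and let $s_{(i)}$ be the size of the $i$-th discovered community. Then for any $\eta,\delta>0$ with $\delta>2\eta\,\mathbb{E}[DS]/\mathbb{E}[D]$ there exists $\zeta>0$ such that, for all sufficiently large $n$, $$\mathbb{P}\Big(\sum_{i=1}^{\eta n^{2/3}}s_{(i)}>\delta n^{2/3}\Big)\le e^{-\zeta n^{2/3}/s_{\max}},$$ where $s_{\max}=\max_{i\in[n]}s_{H_i}$.
   Context: A community is $H=(F,\boldsymbol d)$, $F=(V_F,E_F)$ a finite simple connected graph, $\boldsymbol d=(d_v^{(b)})_{v\in V_F}$ nonnegative integers; $s_H=|V_F|$, $d_H=\sum_v d_v^{(b)}$. The HCM with community sequence $(H_i)_{i\in[n]}$: attach $d_v^{(b)}$ half-edges to each vertex $v$ and pair all half-edges uniformly at random (total even). $H_n$ uniform community, $D_n=d_{H_n}$, $S_n=s_{H_n}$, $P_n(H)$ fraction of communities equal to $H$. Community regularity condition: (i) $P_n(H)\to P(H)$ for all $H$ ($P$ a probability distribution on communities, $(S,D)$ size and degree under $P$); (ii) $\mathbb{E}[S_n]\to\mathbb{E}[S]<\infty$; (iii) $\mathbb{E}[D_nS_n]\to\mathbb{E}[DS]<\infty$; (iv) $s_{\max}\log(n)/n^{2/3}\to0$. Inter-community connectivity condition: (i) $\mathbb{E}[D_n^3]\to\mathbb{E}[D^3]<\infty$; (ii) $\mathbb{P}(D=0)<1$, $\mathbb{P}(D=1)\in(0,1)$;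 (iii) $\mathbb{E}[D_n(D_n-1)]/\mathbb{E}[D_n]=1+\lambda n^{-1/3}+o(n^{-1/3})$ for some $\lambda\in\mathbb{R}$. Exploration process (depth-first, on communities): initially all half-edges are sleeping. At each step: if there is an active half-edge, take the most recently added one $a$, remove it, reveal its partner $b$ and discover the community of $b$; its other half-edges become active, except that those paired to currently active half-edges or paired within the same community are removed with their partners. If no half-edge is active, choose a sleeping half-edge uniformly at random, discover its community, and make all its half-edges active. Each step discovers one new community. *)

theory Defs
  imports "HOL-Probability.Probability" "HOL-Library.Nat_Bijection"
begin

(* A community H = (F, d): vertices of F are 0..<s (s = length of the degree list),
   edges are 2-element sets of vertices, d ! v = d_v^(b) = number of half-edges at v. *)
type_synonym community = "nat set set \<times> nat list"

definition csize :: "community \<Rightarrow> nat" where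
  "csize H = length (snd H)"

definition cdeg :: "community \<Rightarrow> nat" where
  "cdeg H = sum_list (snd H)"

definition is_community :: "community \<Rightarrow> bool" where
  "is_community H \<longleftrightarrow> csize H \<ge> 1
     \<and> (\<forall>e\<in>fst H. \<exists>u v. e = {u, v} \<and> u \<noteq> v \<and> u < csize H \<and> v < csize H)
     \<and> (\<forall>u<csize H. \<forall>v<csize H. (u, v) \<in> {(x, y). {x, y} \<in> fst H}\<^sup>*)"

(* half-edge (c, v, k): k-th half-edge attached to vertex v of community number c *)
type_synonym hedge = "nat \<times> nat \<times> nat"

definition comm_hedges :: "(nat \<Rightarrow> community) \<Rightarrow> nat \<Rightarrow> hedge set" where
  "comm_hedges Hs c = {(c', v, k). c' = c \<and> v < csize (Hs c) \<and> k < snd (Hs c) ! v}"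

definition hcm_hedges :: "(nat \<Rightarrow> community) \<Rightarrow> nat \<Rightarrow> hedge set" where
  "hcm_hedges Hs n = (\<Union>c<n. comm_hedges Hs c)"

definition perfect_matchings :: "hedge set \<Rightarrow> (hedge \<Rightarrow> hedge) set" where
  "perfect_matchings A = {M. (\<forall>h\<in>A. M h \<in> A \<and> M h \<noteq> h \<and> M (M h) = h) \<and> (\<forall>h. h \<notin> A \<longrightarrow> M h = h)}"

(* state: (stack of active half-edges, most recent first; sleeping half-edges;
           list of discovered community indices in order of discovery) *)
(* fixed deterministic order on half-edges, used to break ties among half-edges
   activated simultaneously (via an injective encoding into nat) *)
definition hedge_key :: "hedge \<Rightarrow> nat" where
  "hedge_key h = prod_encode (fst h, prod_encode (snd h))"

definition hedge_list :: "hedge set \<Rightarrow> hedge list" where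
  "hedge_list A = sorted_key_list_of_set hedge_key A"

type_synonym expl_state = "hedge list \<times> hedge set \<times> nat list"

definition explore_step :: "(nat \<Rightarrow> community) \<Rightarrow> (hedge \<Rightarrow> hedge) \<Rightarrow> expl_state \<Rightarrow> expl_state pmf" where
  "explore_step Hs M st = (case st of (act, sl, disc) \<Rightarrow>
     (case act of
        a # act' \<Rightarrow>
          (let b = M a; c = fst b; Hc = comm_hedges Hs c;
               new = hedge_list {h \<in> Hc. h \<noteq> b \<and> M h \<notin> set act' \<and> fst (M h) \<noteq> c}
           in return_pmf (new @ filter (\<lambda>x. M x \<notin> Hc) act', sl - Hc, disc @ [c]))
      | [] \<Rightarrow>
          (if sl = {} then return_pmf st
           else pmf_of_set sl \<bind> (\<lambda>h. let c = fst h; Hc = comm_hedges Hs c in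
                  return_pmf (hedge_list {h' \<in> Hc. fst (M h') \<noteq> c}, sl - Hc, disc @ [c])))))"

(* n steps of the exploration (enough to discover every community that has half-edges) *)
definition explore_dist :: "(nat \<Rightarrow> community) \<Rightarrow> nat \<Rightarrow> (hedge \<Rightarrow> hedge) \<Rightarrow> expl_state pmf" where
  "explore_dist Hs n M = ((\<lambda>p. p \<bind> explore_step Hs M) ^^ n) (return_pmf ([], hcm_hedges Hs n, []))"

definition hcm_exploration :: "(nat \<Rightarrow> community) \<Rightarrow> nat \<Rightarrow> nat list pmf" where
  "hcm_exploration Hs n =
     pmf_of_set (perfect_matchings (hcm_hedges Hs n)) \<bind>
       (\<lambda>M. map_pmf (\<lambda>st. snd (snd st)) (explore_dist Hs n M))"

(* sum_{i=1}^{k} s_(i) (discovered communities beyond the last one contribute 0) *)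
definition first_sizes_sum :: "(nat \<Rightarrow> community) \<Rightarrow> nat \<Rightarrow> nat list \<Rightarrow> nat" where
  "first_sizes_sum Hs k disc = (\<Sum>c\<leftarrow>take k disc. csize (Hs c))"

definition hcm_smax :: "(nat \<Rightarrow> community) \<Rightarrow> nat \<Rightarrow> nat" where
  "hcm_smax Hs n = Max (csize ` Hs ` {..<n})"

definition emp_mean :: "(nat \<Rightarrow> community) \<Rightarrow> nat \<Rightarrow> (community \<Rightarrow> real) \<Rightarrow> real" where
  "emp_mean Hs n f = (\<Sum>i<n. f (Hs i)) / real n"

end

theory Submission
  imports Defs
begin

(* Chernoff bound with \<theta> = 1/s_max for the sum of the first k = \<lfloor>\<eta> n^(2/3)\<rfloor> discovered sizes.
   Averaged over the uniform matching, every exploration step discovers the community of a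
   uniformly random sleeping half-edge: for a restart this is the definition, and for an active
   half-edge it holds because transposing the partners of two sleeping half-edges is a bijection
   of matchings that leaves the history unchanged. If any k communities have total degree at
   most R (with R = k K + \<Sum> d_i^3 / K^2), then while fewer than k communities are discovered at
   least L - R of the L half-edges sleep, so each of the first k steps multiplies the exponential
   moment by at most 1 + \<Sum>_h (e^(\<theta> s_h) - 1) / (L - R) \<le> exp (2 \<theta> \<Sum>_i d_i s_i / (L - R)).
   The regularity conditions make k \<Sum>_i d_i s_i / (L - R) asymptotically at most
   \<eta> E[DS] / E[D] n^(2/3), which is below \<delta> n^(2/3) / 2. *)

subsection \<open>Half-edges\<close>

lemma comm_hedges_fst: "h \<in> comm_hedges Hs c \<Longrightarrow> fst h = c"
  by (auto simp: comm_hedges_def)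

lemma comm_hedges_eq_image:
  "comm_hedges Hs c = (\<lambda>(v, k). (c, v, k)) ` (SIGMA v:{..<csize (Hs c)}. {..<snd (Hs c) ! v})"
  by (auto simp: comm_hedges_def image_iff)

lemma finite_comm_hedges [simp]: "finite (comm_hedges Hs c)"
  unfolding comm_hedges_eq_image by auto

lemma card_comm_hedges: "card (comm_hedges Hs c) = cdeg (Hs c)"
proof -
  have "card (comm_hedges Hs c) = card (SIGMA v:{..<csize (Hs c)}. {..<snd (Hs c) ! v})"
    unfolding comm_hedges_eq_image by (rule card_image) (auto simp: inj_on_def)
  also have "\<dots> = (\<Sum>v<csize (Hs c). snd (Hs c) ! v)" by simp
  also have "\<dots> = cdeg (Hs c)" by (simp add: cdeg_def csize_def sum_list_sum_nth atLeast0LessThan)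
  finally show ?thesis .
qed

lemma finite_hcm_hedges [simp]: "finite (hcm_hedges Hs N)"
  by (simp add: hcm_hedges_def)

lemma mem_hcm_hedges_iff: "h \<in> hcm_hedges Hs N \<longleftrightarrow> fst h < N \<and> h \<in> comm_hedges Hs (fst h)"
  by (auto simp: hcm_hedges_def comm_hedges_fst)

lemma mem_comm_hedges_iff: "x \<in> hcm_hedges Hs N \<Longrightarrow> x \<in> comm_hedges Hs c \<longleftrightarrow> fst x = c"
  using mem_hcm_hedges_iff comm_hedges_fst by blast

lemma comm_hedges_subset_hcm_hedges: "c < N \<Longrightarrow> comm_hedges Hs c \<subseteq> hcm_hedges Hs N"
  by (auto simp: hcm_hedges_def)

lemma sum_hcm_hedges_fst:
  "(\<Sum>h\<in>hcm_hedges Hs N. g (fst h)) = (\<Sum>c<N. of_nat (cdeg (Hs c)) * g c)"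
proof -
  have "(\<Sum>h\<in>hcm_hedges Hs N. g (fst h)) = (\<Sum>c<N. \<Sum>h\<in>comm_hedges Hs c. g (fst h))"
    unfolding hcm_hedges_def by (rule sum.UNION_disjoint) (auto dest: comm_hedges_fst)
  also have "\<dots> = (\<Sum>c<N. \<Sum>h\<in>comm_hedges Hs c. g c)"
    by (intro sum.cong refl) (auto dest: comm_hedges_fst)
  finally show ?thesis by (simp add: card_comm_hedges)
qed

lemma card_hcm_hedges: "card (hcm_hedges Hs N) = (\<Sum>c<N. cdeg (Hs c))"
  using sum_hcm_hedges_fst[of "\<lambda>_. 1::nat" Hs N] by simp

lemma card_hcm_hedges_discovered:
  "card {h \<in> hcm_hedges Hs N. fst h \<in> D} \<le> (\<Sum>c\<in>D \<inter> {..<N}. cdeg (Hs c))"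
proof -
  have "{h \<in> hcm_hedges Hs N. fst h \<in> D} \<subseteq> (\<Union>c\<in>D \<inter> {..<N}. comm_hedges Hs c)"
    by (auto simp: mem_hcm_hedges_iff)
  then have "card {h \<in> hcm_hedges Hs N. fst h \<in> D} \<le> card (\<Union>c\<in>D \<inter> {..<N}. comm_hedges Hs c)"
    by (rule card_mono[rotated]) auto
  also have "\<dots> \<le> (\<Sum>c\<in>D \<inter> {..<N}. card (comm_hedges Hs c))" by (rule card_UN_le) auto
  finally show ?thesis by (simp add: card_comm_hedges)
qed

lemma inj_hedge_key: "inj hedge_key"
  unfolding hedge_key_def inj_def by (auto dest!: inj_prod_encode[THEN injD] simp: prod_eq_iff)

interpretation hedge_order: folding_insort_key "(\<le>) :: nat \<Rightarrow> nat \<Rightarrow> bool" "(<)" UNIV hedge_key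
  by unfold_locales (simp add: inj_hedge_key)

(* The interpretation states its facts for the locale form of the sorting functions on nat. *)
lemma linorder_insort_key_nat: "linorder.insort_key ((\<le>) :: nat \<Rightarrow> _) f = insort_key f"
proof (intro ext)
  fix x xs show "linorder.insort_key ((\<le>) :: nat \<Rightarrow> _) f x xs = insort_key f x xs"
    by (induct xs) (simp_all add: linorder.insort_key.simps[OF linorder_class.linorder_axioms])
qed

lemma linorder_sorted_key_list_of_set_nat:
  "linorder.sorted_key_list_of_set ((\<le>) :: nat \<Rightarrow> _) f A = sorted_key_list_of_set f A"
  by (simp add: linorder.sorted_key_list_of_set_def[OF linorder_class.linorder_axioms]
      sorted_key_list_of_set_def linorder_insort_key_nat)

lemma set_hedge_list: "finite X \<Longrightarrow> set (hedge_list X) = X"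
  using hedge_order.set_sorted_key_list_of_set[of X]
  by (simp add: hedge_list_def linorder_sorted_key_list_of_set_nat)

subsection \<open>Perfect matchings\<close>

lemma perfect_matchingsD:
  assumes "M \<in> perfect_matchings A" "h \<in> A"
  shows "M h \<in> A" "M h \<noteq> h" "M (M h) = h"
  using assms by (auto simp: perfect_matchings_def)

lemma perfect_matchings_outside: "M \<in> perfect_matchings A \<Longrightarrow> h \<notin> A \<Longrightarrow> M h = h"
  unfolding perfect_matchings_def by blast

lemma finite_perfect_matchings:
  assumes "finite A"
  shows "finite (perfect_matchings A)"
proof (rule finite_imageD)
  show "finite ((\<lambda>M. restrict M A) ` perfect_matchings A)"
    by (rule finite_subset[OF _ finite_PiE[OF assms assms]]) (auto simp: perfect_matchings_def)
  show "inj_on (\<lambda>M. restrict M A) (perfect_matchings A)"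
  proof (rule inj_onI, rule ext)
    fix M M' x
    assume M: "M \<in> perfect_matchings A" and M': "M' \<in> perfect_matchings A"
      and eq: "restrict M A = restrict M' A"
    show "M x = M' x"
    proof (cases "x \<in> A")
      case True
      then show ?thesis using fun_cong[OF eq, of x] by simp
    qed (simp add: perfect_matchings_outside[OF M] perfect_matchings_outside[OF M'])
  qed
qed

lemma perfect_matchings_nonempty:
  assumes "finite A" "even (card A)"
  shows "perfect_matchings A \<noteq> {}"
  using assms
proof (induction "card A" arbitrary: A rule: less_induct)
  case less
  show ?case
  proof (cases "A = {}")
    case True
    then have "id \<in> perfect_matchings A" by (simp add: perfect_matchings_def)
    then show ?thesis by blast
  next
    case False
    then obtain x where x: "x \<in> A" by blast
    have "card A \<noteq> 1" using less.prems(2) by auto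
    then have "A \<noteq> {x}" by auto
    then have "A - {x} \<noteq> {}" using x by blast
    then obtain y where y: "y \<in> A" "y \<noteq> x" by blast
    let ?A' = "A - {x, y}"
    have card_A': "card ?A' + 2 = card A"
      using x y less.prems(1) card_Diff_subset[of "{x, y}" A] card_mono[of A "{x, y}"] by auto
    have "perfect_matchings ?A' \<noteq> {}"
    proof (rule less.hyps)
      show "even (card ?A')" using card_A' less.prems(2) by presburger
    qed (use card_A' less.prems(1) in auto)
    then obtain M' where M': "M' \<in> perfect_matchings ?A'" by blast
    have "M'(x := y, y := x) \<in> perfect_matchings A"
      using x y perfect_matchingsD[OF M'] perfect_matchings_outside[OF M']
      unfolding perfect_matchings_def by auto
    then show ?thesis by blast
  qed
qed

definition transpose_conj :: "'a \<Rightarrow> 'a \<Rightarrow> ('a \<Rightarrow> 'a) \<Rightarrow> 'a \<Rightarrow> 'a" where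
  "transpose_conj b b' M = Transposition.transpose b b' \<circ> M \<circ> Transposition.transpose b b'"

lemma transpose_conj_involutory [simp]: "transpose_conj b b' (transpose_conj b b' M) = M"
  by (simp add: transpose_conj_def fun_eq_iff)

lemma transpose_conj_apply_other:
  "x \<noteq> b \<Longrightarrow> x \<noteq> b' \<Longrightarrow> transpose_conj b b' M x = Transposition.transpose b b' (M x)"
  by (simp add: transpose_conj_def)

lemma transpose_conj_perfect_matching:
  assumes M: "M \<in> perfect_matchings A" and b: "b \<in> A" "b' \<in> A"
  shows "transpose_conj b b' M \<in> perfect_matchings A"
proof -
  let ?t = "Transposition.transpose b b'"
  have t_in: "?t x \<in> A \<longleftrightarrow> x \<in> A" for x
    using b by (auto simp: Transposition.transpose_def)
  have "transpose_conj b b' M h \<in> A \<and> transpose_conj b b' M h \<noteq> h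
      \<and> transpose_conj b b' M (transpose_conj b b' M h) = h" if h: "h \<in> A" for h
  proof -
    have th: "?t h \<in> A" using h t_in by blast
    show ?thesis
      using perfect_matchingsD[OF M th] t_in unfolding transpose_conj_def comp_def
      by (metis transpose_involutory)
  qed
  moreover have "transpose_conj b b' M h = h" if "h \<notin> A" for h
    using that t_in perfect_matchings_outside[OF M] unfolding transpose_conj_def comp_def
    by (metis transpose_involutory)
  ultimately show ?thesis by (simp add: perfect_matchings_def)
qed

subsection \<open>The exploration process\<close>

definition explore_iter :: "(nat \<Rightarrow> community) \<Rightarrow> nat \<Rightarrow> nat \<Rightarrow> (hedge \<Rightarrow> hedge) \<Rightarrow> expl_state pmf" where
  "explore_iter Hs N j M = ((\<lambda>p. p \<bind> explore_step Hs M) ^^ j) (return_pmf ([], hcm_hedges Hs N, []))"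

lemma explore_iter_0: "explore_iter Hs N 0 M = return_pmf ([], hcm_hedges Hs N, [])"
  by (simp add: explore_iter_def)

lemma explore_iter_Suc: "explore_iter Hs N (Suc j) M = explore_iter Hs N j M \<bind> explore_step Hs M"
  by (simp add: explore_iter_def)

lemma explore_dist_eq_explore_iter: "explore_dist Hs n M = explore_iter Hs n n M"
  by (simp add: explore_iter_def explore_dist_def)

lemma explore_step_active:
  "explore_step Hs M (a # act, sl, disc) =
     (let b = M a; c = fst b; Hc = comm_hedges Hs c in
      return_pmf (hedge_list {h \<in> Hc. h \<noteq> b \<and> M h \<notin> set act \<and> fst (M h) \<noteq> c}
                    @ filter (\<lambda>x. M x \<notin> Hc) act, sl - Hc, disc @ [c]))"
  by (simp add: explore_step_def)

lemma explore_step_idle: "explore_step Hs M ([], {}, disc) = return_pmf ([], {}, disc)"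
  by (simp add: explore_step_def)

definition restart_state :: "(nat \<Rightarrow> community) \<Rightarrow> (hedge \<Rightarrow> hedge) \<Rightarrow> hedge set \<Rightarrow> nat list \<Rightarrow> hedge \<Rightarrow> expl_state" where
  "restart_state Hs M sl disc h =
     (hedge_list {h' \<in> comm_hedges Hs (fst h). fst (M h') \<noteq> fst h}, sl - comm_hedges Hs (fst h), disc @ [fst h])"

lemma explore_step_restart:
  "sl \<noteq> {} \<Longrightarrow> explore_step Hs M ([], sl, disc) = map_pmf (restart_state Hs M sl disc) (pmf_of_set sl)"
  by (simp add: explore_step_def restart_state_def Let_def map_pmf_def)

lemma set_explore_step_restart:
  "finite sl \<Longrightarrow> sl \<noteq> {} \<Longrightarrow> set_pmf (explore_step Hs M ([], sl, disc)) = restart_state Hs M sl disc ` sl"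
  by (simp add: explore_step_restart)

lemma explore_step_sleeping_subset:
  assumes "finite sl" "s' \<in> set_pmf (explore_step Hs M (act, sl, disc))"
  shows "fst (snd s') \<subseteq> sl"
proof (cases act)
  case (Cons a act')
  then show ?thesis using assms by (auto simp: explore_step_active Let_def)
next
  case Nil
  then show ?thesis
    using assms by (cases "sl = {}") (auto simp: explore_step_idle set_explore_step_restart restart_state_def)
qed

lemma ennreal_pmf_bind_eq_nn_integral:
  "ennreal (pmf (p \<bind> f) x) = (\<integral>\<^sup>+ y. ennreal (pmf p y * pmf (f y) x) \<partial>count_space UNIV)"
  by (simp add: ennreal_pmf_bind nn_integral_measure_pmf ennreal_mult')

lemma pmf_map_pmf_mono:
  assumes "\<And>x. x \<in> set_pmf p \<Longrightarrow> f x = y \<Longrightarrow> g x = y"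
  shows "pmf (map_pmf f p) y \<le> pmf (map_pmf g p) y"
proof -
  have "measure p (f -` {y} \<inter> set_pmf p) \<le> measure p (g -` {y} \<inter> set_pmf p)"
    by (rule measure_pmf.finite_measure_mono) (use assms in auto)
  then show ?thesis by (simp add: pmf_map measure_Int_set_pmf)
qed

lemma transpose_mem_iff: "b \<notin> S \<Longrightarrow> b' \<notin> S \<Longrightarrow> Transposition.transpose b b' y \<in> S \<longleftrightarrow> y \<in> S"
  by (auto simp: Transposition.transpose_def)

lemma transpose_conj_on_comm_hedges:
  assumes "fst b \<noteq> c" "fst b' \<noteq> c" "h \<in> comm_hedges Hs c"
  shows "transpose_conj b b' M h = Transposition.transpose b b' (M h)"
  using assms comm_hedges_fst by (intro transpose_conj_apply_other) blast+

lemma restart_state_transpose: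
  assumes "fst b \<noteq> fst h" "fst b' \<noteq> fst h"
  shows "restart_state Hs (transpose_conj b b' M) sl disc h = restart_state Hs M sl disc h"
proof -
  have b_c: "b \<notin> {y. fst y = fst h}" "b' \<notin> {y. fst y = fst h}" using assms by auto
  have "fst (transpose_conj b b' M h') = fst h \<longleftrightarrow> fst (M h') = fst h" if "h' \<in> comm_hedges Hs (fst h)" for h'
    using transpose_mem_iff[OF b_c, of "M h'"] by (simp add: transpose_conj_on_comm_hedges[OF assms that])
  then have "{h' \<in> comm_hedges Hs (fst h). fst (transpose_conj b b' M h') \<noteq> fst h}
               = {h' \<in> comm_hedges Hs (fst h). fst (M h') \<noteq> fst h}" by blast
  then show ?thesis by (simp add: restart_state_def)
qed

lemma explore_step_transpose_active:
  assumes "fst b \<noteq> fst (M a)" "fst b' \<noteq> fst (M a)" "b \<notin> set (a # act)" "b' \<notin> set (a # act)"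
  shows "explore_step Hs (transpose_conj b b' M) (a # act, sl, disc) = explore_step Hs M (a # act, sl, disc)"
proof -
  let ?c = "fst (M a)" and ?Hc = "comm_hedges Hs (fst (M a))"
  have b_Hc: "b \<notin> ?Hc" "b' \<notin> ?Hc" and b_c: "b \<notin> {y. fst y = ?c}" "b' \<notin> {y. fst y = ?c}"
    using assms(1,2) comm_hedges_fst by blast+
  have "M a \<noteq> b" "M a \<noteq> b'" "a \<noteq> b" "a \<noteq> b'" using assms by auto
  then have Ma: "transpose_conj b b' M a = M a"
    using transpose_conj_apply_other[of a b b' M] by simp
  have "b \<notin> set act" "b' \<notin> set act" using assms(3,4) by auto
  note tr_act = transpose_mem_iff[OF this]
  have "transpose_conj b b' M h \<in> set act \<longleftrightarrow> M h \<in> set act"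
       "fst (transpose_conj b b' M h) = ?c \<longleftrightarrow> fst (M h) = ?c" if "h \<in> ?Hc" for h
    using tr_act[of "M h"] transpose_mem_iff[OF b_c, of "M h"]
    by (simp_all add: transpose_conj_on_comm_hedges[OF assms(1,2) that])
  then have "{h \<in> ?Hc. h \<noteq> M a \<and> transpose_conj b b' M h \<notin> set act \<and> fst (transpose_conj b b' M h) \<noteq> ?c}
          = {h \<in> ?Hc. h \<noteq> M a \<and> M h \<notin> set act \<and> fst (M h) \<noteq> ?c}"
    by blast
  moreover have "filter (\<lambda>x. transpose_conj b b' M x \<notin> ?Hc) act = filter (\<lambda>x. M x \<notin> ?Hc) act"
  proof (rule filter_cong[OF refl])
    fix x assume "x \<in> set act"
    then have "x \<noteq> b" "x \<noteq> b'" using assms(3,4) by auto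
    then show "(transpose_conj b b' M x \<notin> ?Hc) = (M x \<notin> ?Hc)"
      using transpose_mem_iff[OF b_Hc] transpose_conj_apply_other by metis
  qed
  ultimately show ?thesis by (simp add: explore_step_active Ma Let_def)
qed

definition explore_inv :: "(nat \<Rightarrow> community) \<Rightarrow> nat \<Rightarrow> (hedge \<Rightarrow> hedge) \<Rightarrow> nat \<Rightarrow> expl_state \<Rightarrow> bool" where
  "explore_inv Hs N M j s \<longleftrightarrow> (case s of (act, sl, disc) \<Rightarrow>
       sl = {x \<in> hcm_hedges Hs N. fst x \<notin> set disc}
     \<and> set act = {x \<in> hcm_hedges Hs N. fst x \<in> set disc \<and> fst (M x) \<notin> set disc}
     \<and> (length disc = j \<or> act = [] \<and> sl = {} \<and> length disc \<le> j))"

context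
  fixes Hs N M and A :: "hedge set"
  defines "A \<equiv> hcm_hedges Hs N"
  assumes M: "M \<in> perfect_matchings A"
begin

lemma mem_comm_hedges_iff_A: "x \<in> A \<Longrightarrow> x \<in> comm_hedges Hs c \<longleftrightarrow> fst x = c"
  unfolding A_def by (rule mem_comm_hedges_iff)

context
  fixes a act disc
  assumes act: "set (a # act) = {x \<in> A. fst x \<in> set disc \<and> fst (M x) \<notin> set disc}"
begin

lemma active_half_edge:
  shows "a \<in> A" "fst a \<in> set disc" "fst (M a) \<notin> set disc" "comm_hedges Hs (fst (M a)) \<subseteq> A"
proof -
  show a: "a \<in> A" "fst a \<in> set disc" "fst (M a) \<notin> set disc" using act by auto
  show "comm_hedges Hs (fst (M a)) \<subseteq> A"
    using perfect_matchingsD(1)[OF M a(1)] unfolding A_def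
    by (simp add: comm_hedges_subset_hcm_hedges mem_hcm_hedges_iff)
qed

lemma active_step_new_partner:
  assumes x: "x \<in> comm_hedges Hs (fst (M a))" "x \<noteq> M a" "M x \<notin> set act"
  shows "fst (M x) \<notin> set disc"
proof
  assume "fst (M x) \<in> set disc"
  moreover have "x \<in> A" "fst x = fst (M a)" using x(1) active_half_edge(4) comm_hedges_fst by auto
  ultimately have "M x \<in> set (a # act)"
    using act perfect_matchingsD[OF M] active_half_edge(3) by auto
  moreover have "M x \<noteq> a" using x(2) perfect_matchingsD(3)[OF M \<open>x \<in> A\<close>] by metis
  ultimately show False using x(3) by simp
qed

lemma active_step_active_eq:
  defines "c \<equiv> fst (M a)"
  shows "set (hedge_list {h \<in> comm_hedges Hs c. h \<noteq> M a \<and> M h \<notin> set act \<and> fst (M h) \<noteq> c}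
              @ filter (\<lambda>x. M x \<notin> comm_hedges Hs c) act)
           = {x \<in> A. fst x \<in> set (disc @ [c]) \<and> fst (M x) \<notin> set (disc @ [c])}"
proof -
  note a = active_half_edge[folded c_def]
  let ?new = "{h \<in> comm_hedges Hs c. h \<noteq> M a \<and> M h \<notin> set act \<and> fst (M h) \<noteq> c}"
  have set_new: "set (hedge_list ?new) = ?new" by (rule set_hedge_list) simp
  have partner_c: "M x \<in> comm_hedges Hs c \<longleftrightarrow> fst (M x) = c" if "x \<in> A" for x
    using mem_comm_hedges_iff_A perfect_matchingsD(1)[OF M that] by blast
  have "set (hedge_list ?new @ filter (\<lambda>x. M x \<notin> comm_hedges Hs c) act)
          = ?new \<union> {x \<in> set act. M x \<notin> comm_hedges Hs c}"
    by (simp add: set_new)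
  also have "\<dots> = {x \<in> A. fst x \<in> set (disc @ [c]) \<and> fst (M x) \<notin> set (disc @ [c])}"
  proof (intro set_eqI iffI)
    fix x assume "x \<in> ?new \<union> {x \<in> set act. M x \<notin> comm_hedges Hs c}"
    then show "x \<in> {x \<in> A. fst x \<in> set (disc @ [c]) \<and> fst (M x) \<notin> set (disc @ [c])}"
    proof (elim UnE)
      assume x: "x \<in> ?new"
      then have "x \<in> A" "fst x = c" using a(4) comm_hedges_fst[of x] by auto
      then show ?thesis using x active_step_new_partner[folded c_def, of x] by simp
    next
      assume x: "x \<in> {x \<in> set act. M x \<notin> comm_hedges Hs c}"
      then have "x \<in> A" "fst x \<in> set disc" "fst (M x) \<notin> set disc" using act by auto
      then show ?thesis using x partner_c by simp
    qed
  next
    fix x assume "x \<in> {x \<in> A. fst x \<in> set (disc @ [c]) \<and> fst (M x) \<notin> set (disc @ [c])}"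
    then have x: "x \<in> A" "fst x \<in> set (disc @ [c])" "fst (M x) \<notin> set disc" "fst (M x) \<noteq> c" by auto
    show "x \<in> ?new \<union> {x \<in> set act. M x \<notin> comm_hedges Hs c}"
    proof (cases "fst x = c")
      case True
      have "x \<noteq> M a" using x(3) a(2) perfect_matchingsD(3)[OF M a(1)] by auto
      moreover have "M x \<notin> set act" using act x(3) by auto
      ultimately show ?thesis using True x mem_comm_hedges_iff_A by simp
    next
      case False
      then have "x \<in> set (a # act)" using act x by auto
      moreover have "x \<noteq> a" using x(4) by (auto simp: c_def)
      ultimately show ?thesis using x partner_c by simp
    qed
  qed
  finally show ?thesis .
qed

end

lemma explore_inv_restart_step:
  assumes sl: "sl = {x \<in> A. fst x \<notin> set disc}"
    and act: "{x \<in> A. fst x \<in> set disc \<and> fst (M x) \<notin> set disc} = {}"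
    and h: "h \<in> sl"
  shows "explore_inv Hs N M (Suc (length disc)) (restart_state Hs M sl disc h)"
proof -
  let ?c = "fst h" and ?new = "{h' \<in> comm_hedges Hs (fst h). fst (M h') \<noteq> fst h}"
  have hA: "h \<in> A" and c_new: "?c \<notin> set disc" using h sl by auto
  have Hc_sub: "comm_hedges Hs ?c \<subseteq> A"
    using hA unfolding A_def by (simp add: comm_hedges_subset_hcm_hedges mem_hcm_hedges_iff)
  have set_new: "set (hedge_list ?new) = ?new" by (rule set_hedge_list) simp
  have "?new = {x \<in> A. fst x \<in> set (disc @ [?c]) \<and> fst (M x) \<notin> set (disc @ [?c])}"
  proof (intro set_eqI iffI)
    fix x assume x: "x \<in> ?new"
    then have xA: "x \<in> A" and fx: "fst x = ?c" using Hc_sub comm_hedges_fst[of x] by auto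
    have "fst (M x) \<notin> set disc"
    proof
      assume "fst (M x) \<in> set disc"
      then have "M x \<in> {x \<in> A. fst x \<in> set disc \<and> fst (M x) \<notin> set disc}"
        using perfect_matchingsD[OF M xA] fx c_new by simp
      then show False using act by blast
    qed
    then show "x \<in> {x \<in> A. fst x \<in> set (disc @ [?c]) \<and> fst (M x) \<notin> set (disc @ [?c])}"
      using x xA fx by simp
  next
    fix x assume x: "x \<in> {x \<in> A. fst x \<in> set (disc @ [?c]) \<and> fst (M x) \<notin> set (disc @ [?c])}"
    have "fst x \<notin> set disc"
    proof
      assume "fst x \<in> set disc"
      then have "x \<in> {x \<in> A. fst x \<in> set disc \<and> fst (M x) \<notin> set disc}" using x by simp
      then show False using act by blast
    qed
    then show "x \<in> ?new" using x mem_comm_hedges_iff_A by auto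
  qed
  moreover have "sl - comm_hedges Hs ?c = {x \<in> A. fst x \<notin> set (disc @ [?c])}"
    using mem_comm_hedges_iff_A unfolding sl by auto
  ultimately show ?thesis
    unfolding explore_inv_def restart_state_def prod.case set_new A_def[symmetric] by simp
qed

lemma explore_step_inv:
  assumes inv: "explore_inv Hs N M j s" and s': "s' \<in> set_pmf (explore_step Hs M s)"
  shows "explore_inv Hs N M (Suc j) s'"
proof -
  obtain act sl disc where s: "s = (act, sl, disc)" by (cases s)
  have sl: "sl = {x \<in> A. fst x \<notin> set disc}"
    and act: "set act = {x \<in> A. fst x \<in> set disc \<and> fst (M x) \<notin> set disc}"
    and len: "length disc = j \<or> act = [] \<and> sl = {} \<and> length disc \<le> j"
    using inv unfolding explore_inv_def s A_def prod.case by blast+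
  show ?thesis
  proof (cases act)
    case (Cons a act')
    have "length disc = j" using len Cons by auto
    moreover have "s' = (hedge_list {h \<in> comm_hedges Hs (fst (M a)). h \<noteq> M a \<and> M h \<notin> set act'
                                        \<and> fst (M h) \<noteq> fst (M a)}
                         @ filter (\<lambda>x. M x \<notin> comm_hedges Hs (fst (M a))) act',
                       sl - comm_hedges Hs (fst (M a)), disc @ [fst (M a)])"
      using s' by (simp add: s Cons explore_step_active Let_def)
    moreover have "sl - comm_hedges Hs (fst (M a)) = {x \<in> A. fst x \<notin> set (disc @ [fst (M a)])}"
      using mem_comm_hedges_iff_A unfolding sl by auto
    ultimately show ?thesis
      using active_step_active_eq[of a act' disc] act Cons unfolding explore_inv_def A_def by simp
  next
    case Nil
    show ?thesis
    proof (cases "sl = {}")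
      case True
      then have "s' = s" using s' by (simp add: s Nil explore_step_idle)
      then show ?thesis using inv len by (auto simp: s Nil True explore_inv_def)
    next
      case False
      have "finite sl" unfolding sl A_def by simp
      then obtain h where h: "h \<in> sl" and s'_eq: "s' = restart_state Hs M sl disc h"
        using s' False by (auto simp: s Nil set_explore_step_restart)
      show ?thesis
        using explore_inv_restart_step[OF sl _ h] act len False by (simp add: s'_eq Nil)
    qed
  qed
qed

lemma explore_iter_inv: "s \<in> set_pmf (explore_iter Hs N j M) \<Longrightarrow> explore_inv Hs N M j s"
proof (induction j arbitrary: s)
  case 0
  then show ?case by (simp add: explore_iter_0 explore_inv_def)
next
  case (Suc j)
  then show ?case by (auto simp: explore_iter_Suc intro: explore_step_inv)
qed

(* Neither b nor b' has been revealed, so swapping their partners does not affect the step. *)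
lemma explore_step_transpose_le:
  assumes inv: "explore_inv Hs N M j (act, sl, disc)"
    and s': "s' \<in> set_pmf (explore_step Hs M (act, sl, disc))"
    and b: "b \<in> fst (snd s')" "b' \<in> fst (snd s')"
  shows "pmf (explore_step Hs M (act, sl, disc)) s'
           \<le> pmf (explore_step Hs (transpose_conj b b' M) (act, sl, disc)) s'"
proof -
  have sl: "sl = {x \<in> A. fst x \<notin> set disc}"
    and act: "set act = {x \<in> A. fst x \<in> set disc \<and> fst (M x) \<notin> set disc}"
    using inv unfolding explore_inv_def A_def prod.case by blast+
  have "b \<in> sl" "b' \<in> sl"
    using explore_step_sleeping_subset[OF _ s'] b unfolding sl A_def by auto
  then have bA: "b \<in> A" "b' \<in> A" and b_act: "b \<notin> set act" "b' \<notin> set act"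
    using sl act by auto
  show ?thesis
  proof (cases act)
    case (Cons a act')
    have "b \<notin> comm_hedges Hs (fst (M a))" "b' \<notin> comm_hedges Hs (fst (M a))"
      using s' b by (auto simp: Cons explore_step_active Let_def)
    then have "fst b \<noteq> fst (M a)" "fst b' \<noteq> fst (M a)"
      using bA mem_comm_hedges_iff_A by blast+
    then show ?thesis
      using explore_step_transpose_active[where a = a and act = act' and M = M] b_act by (simp add: Cons)
  next
    case Nil
    have sl_ne: "sl \<noteq> {}" using \<open>b \<in> sl\<close> by auto
    show ?thesis unfolding Nil explore_step_restart[OF sl_ne]
    proof (rule pmf_map_pmf_mono)
      fix h assume h: "restart_state Hs M sl disc h = s'"
      then have "b \<notin> comm_hedges Hs (fst h)" "b' \<notin> comm_hedges Hs (fst h)"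
        using b by (auto simp: restart_state_def)
      then have "fst b \<noteq> fst h" "fst b' \<noteq> fst h" using bA mem_comm_hedges_iff_A by blast+
      then show "restart_state Hs (transpose_conj b b' M) sl disc h = s'"
        using h restart_state_transpose by metis
    qed
  qed
qed

lemma explore_iter_transpose_le:
  "b \<in> fst (snd s) \<Longrightarrow> b' \<in> fst (snd s) \<Longrightarrow>
     pmf (explore_iter Hs N j M) s \<le> pmf (explore_iter Hs N j (transpose_conj b b' M)) s"
proof (induction j arbitrary: s)
  case 0
  then show ?case by (simp add: explore_iter_0)
next
  case (Suc j)
  let ?M' = "transpose_conj b b' M"
  have "pmf (explore_iter Hs N j M) s' * pmf (explore_step Hs M s') s
          \<le> pmf (explore_iter Hs N j ?M') s' * pmf (explore_step Hs ?M' s') s" for s'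
  proof (cases "s' \<in> set_pmf (explore_iter Hs N j M) \<and> s \<in> set_pmf (explore_step Hs M s')")
    case True
    obtain act sl disc where s'_eq: "s' = (act, sl, disc)" by (cases s')
    have inv: "explore_inv Hs N M j (act, sl, disc)"
      using explore_iter_inv[of "(act, sl, disc)" j] True by (simp add: s'_eq)
    then have "finite sl" by (simp add: explore_inv_def A_def)
    then have "fst (snd s) \<subseteq> sl"
      using explore_step_sleeping_subset True s'_eq by blast
    then have "b \<in> fst (snd s')" "b' \<in> fst (snd s')" using Suc.prems s'_eq by auto
    then have "pmf (explore_iter Hs N j M) s' \<le> pmf (explore_iter Hs N j ?M') s'"
      by (rule Suc.IH)
    moreover have "pmf (explore_step Hs M s') s \<le> pmf (explore_step Hs ?M' s') s"
      using explore_step_transpose_le[OF inv, of s b b'] True Suc.prems by (simp add: s'_eq)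
    ultimately show ?thesis by (simp add: mult_mono)
  next
    case False
    then have "pmf (explore_iter Hs N j M) s' = 0 \<or> pmf (explore_step Hs M s') s = 0"
      by (simp add: set_pmf_eq)
    then show ?thesis by auto
  qed
  then have "(\<integral>\<^sup>+ s'. ennreal (pmf (explore_iter Hs N j M) s' * pmf (explore_step Hs M s') s) \<partial>count_space UNIV)
      \<le> (\<integral>\<^sup>+ s'. ennreal (pmf (explore_iter Hs N j ?M') s' * pmf (explore_step Hs ?M' s') s) \<partial>count_space UNIV)"
    by (intro nn_integral_mono ennreal_leI)
  then have "ennreal (pmf (explore_iter Hs N (Suc j) M) s) \<le> ennreal (pmf (explore_iter Hs N (Suc j) ?M') s)"
    by (simp only: explore_iter_Suc ennreal_pmf_bind_eq_nn_integral)
  then show ?case by simp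
qed

end

lemma explore_iter_transpose:
  assumes "M \<in> perfect_matchings (hcm_hedges Hs N)" "b \<in> fst (snd s)" "b' \<in> fst (snd s)"
    and "b \<in> hcm_hedges Hs N" "b' \<in> hcm_hedges Hs N"
  shows "pmf (explore_iter Hs N j (transpose_conj b b' M)) s = pmf (explore_iter Hs N j M) s"
proof (rule order_antisym)
  show "pmf (explore_iter Hs N j (transpose_conj b b' M)) s \<le> pmf (explore_iter Hs N j M) s"
    using explore_iter_transpose_le[OF transpose_conj_perfect_matching[OF assms(1,4,5)] assms(2,3)]
    by simp
  show "pmf (explore_iter Hs N j M) s \<le> pmf (explore_iter Hs N j (transpose_conj b b' M)) s"
    using explore_iter_transpose_le[OF assms(1-3)] .
qed

subsection \<open>The partner of an active half-edge is uniform among the sleeping ones\<close>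

lemma sum_partner_exchangeable:
  fixes PM :: "('a \<Rightarrow> 'a) set" and w :: "('a \<Rightarrow> 'a) \<Rightarrow> real" and \<phi> :: "'a \<Rightarrow> real"
  assumes fin: "finite PM" "finite S" and ne: "S \<noteq> {}" and a: "a \<notin> S"
    and supp: "\<And>M. M \<in> PM \<Longrightarrow> w M \<noteq> 0 \<Longrightarrow> M a \<in> S"
    and closed: "\<And>b b' M. b \<in> S \<Longrightarrow> b' \<in> S \<Longrightarrow> M \<in> PM \<Longrightarrow> transpose_conj b b' M \<in> PM"
    and invariant: "\<And>b b' M. b \<in> S \<Longrightarrow> b' \<in> S \<Longrightarrow> M \<in> PM \<Longrightarrow> w (transpose_conj b b' M) = w M"
  shows "(\<Sum>M\<in>PM. w M * \<phi> (M a)) = (\<Sum>b\<in>S. \<phi> b) / card S * (\<Sum>M\<in>PM. w M)"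
proof -
  define W where "W b = (\<Sum>M\<in>{M \<in> PM. M a = b}. w M)" for b
  obtain b0 where b0: "b0 \<in> S" using ne by blast
  have W_const: "W b = W b0" if b: "b \<in> S" for b
  proof -
    let ?t = "transpose_conj b0 b"
    have "a \<noteq> b0" "a \<noteq> b" using a b0 b by auto
    then have t_partner: "?t M a = b \<longleftrightarrow> M a = b0" "?t M a = b0 \<longleftrightarrow> M a = b" for M
      using transpose_conj_apply_other[of a b0 b M] by (auto simp: Transposition.transpose_def)
    show ?thesis
      unfolding W_def
      by (rule sum.reindex_bij_witness[where i = ?t and j = ?t])
        (use t_partner closed[OF b0 b] invariant[OF b0 b] in auto)
  qed
  have by_partner: "(\<Sum>M\<in>PM. w M * g (M a)) = (\<Sum>b\<in>S. g b * W b)" for g :: "'a \<Rightarrow> real"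
  proof -
    have "(\<Sum>M\<in>PM. w M * g (M a)) = (\<Sum>M\<in>{M \<in> PM. M a \<in> S}. w M * g (M a))"
      using fin(1) supp by (intro sum.mono_neutral_right) auto
    also have "\<dots> = (\<Sum>b\<in>S. \<Sum>M\<in>{M \<in> {M \<in> PM. M a \<in> S}. M a = b}. w M * g (M a))"
      using fin by (intro sum.group[symmetric]) auto
    also have "\<dots> = (\<Sum>b\<in>S. g b * W b)"
      unfolding W_def sum_distrib_left
      by (intro sum.cong refl) (auto intro!: sum.cong simp: mult.commute)
    finally show ?thesis .
  qed
  have "(\<Sum>M\<in>PM. w M * \<phi> (M a)) = (\<Sum>b\<in>S. \<phi> b) * W b0"
    using by_partner[of \<phi>] W_const by (simp add: sum_distrib_right)
  moreover have "(\<Sum>M\<in>PM. w M) = card S * W b0"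
    using by_partner[of "\<lambda>_. 1"] W_const by simp
  moreover have "card S > 0" using fin ne by (simp add: card_gt_0_iff)
  ultimately show ?thesis by (simp add: field_simps)
qed

(* Transposing the partners of two sleeping half-edges permutes the matchings that produce a
   given history. *)
lemma sum_active_partner_uniform:
  fixes Hs :: "nat \<Rightarrow> community" and N j :: nat and a :: hedge and act sl disc
    and \<phi> :: "hedge \<Rightarrow> real"
  defines "PM \<equiv> perfect_matchings (hcm_hedges Hs N)"
    and "w M \<equiv> pmf (explore_iter Hs N j M) (a # act, sl, disc)"
  assumes M0: "M0 \<in> PM" "w M0 \<noteq> 0"
  shows "(\<Sum>M\<in>PM. w M * \<phi> (M a)) = (\<Sum>h\<in>sl. \<phi> h) / card sl * (\<Sum>M\<in>PM. w M)"
proof -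
  let ?A = "hcm_hedges Hs N"
  have inv: "explore_inv Hs N M j (a # act, sl, disc)" if "M \<in> PM" "w M \<noteq> 0" for M
    using explore_iter_inv that by (simp add: PM_def w_def set_pmf_eq)
  have sl: "sl = {x \<in> ?A. fst x \<notin> set disc}" and a: "a \<in> ?A" "fst a \<in> set disc"
    using inv[OF M0] by (auto simp: explore_inv_def)
  have partner_sl: "M a \<in> sl" if "M \<in> PM" "w M \<noteq> 0" for M
    using inv[OF that] perfect_matchingsD(1)[of M ?A a] that a sl by (auto simp: PM_def explore_inv_def)
  show ?thesis
  proof (rule sum_partner_exchangeable)
    show "finite PM" by (simp add: PM_def finite_perfect_matchings)
    show "finite sl" "a \<notin> sl" using sl a by auto
    show "M a \<in> sl" if "M \<in> PM" "w M \<noteq> 0" for M using partner_sl that .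
    show "sl \<noteq> {}" using partner_sl[OF M0] by blast
    fix b b' M assume b: "b \<in> sl" "b' \<in> sl" and M: "M \<in> PM"
    then show "transpose_conj b b' M \<in> PM"
      using sl transpose_conj_perfect_matching by (auto simp: PM_def)
    show "w (transpose_conj b b' M) = w M"
      using b M sl unfolding w_def PM_def by (intro explore_iter_transpose) auto
  qed
qed

subsection \<open>The exponential moment of the first discovered sizes\<close>

definition size_weight :: "real \<Rightarrow> (nat \<Rightarrow> community) \<Rightarrow> nat \<Rightarrow> nat list \<Rightarrow> real" where
  "size_weight \<theta> Hs k disc = exp (\<theta> * real (first_sizes_sum Hs k disc))"

lemma size_weight_pos: "size_weight \<theta> Hs k disc > 0"
  by (simp add: size_weight_def)

lemma size_weight_Nil: "size_weight \<theta> Hs k [] = 1"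
  by (simp add: size_weight_def first_sizes_sum_def)

lemma size_weight_snoc:
  "size_weight \<theta> Hs k (disc @ [c]) =
     (if length disc < k then size_weight \<theta> Hs k disc * exp (\<theta> * csize (Hs c)) else size_weight \<theta> Hs k disc)"
  by (simp add: size_weight_def first_sizes_sum_def distrib_left exp_add)

definition mean_sleeping_weight :: "real \<Rightarrow> (nat \<Rightarrow> community) \<Rightarrow> hedge set \<Rightarrow> real" where
  "mean_sleeping_weight \<theta> Hs sl = (\<Sum>h\<in>sl. exp (\<theta> * real (csize (Hs (fst h))))) / real (card sl)"

definition next_size_weight :: "real \<Rightarrow> (nat \<Rightarrow> community) \<Rightarrow> nat \<Rightarrow> (hedge \<Rightarrow> hedge) \<Rightarrow> expl_state \<Rightarrow> real" where
  "next_size_weight \<theta> Hs k M s = (case s of (act, sl, disc) \<Rightarrow> (case act of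
      a # _ \<Rightarrow> size_weight \<theta> Hs k (disc @ [fst (M a)])
    | [] \<Rightarrow> (if sl = {} then size_weight \<theta> Hs k disc
            else (\<Sum>h\<in>sl. size_weight \<theta> Hs k (disc @ [fst h])) / card sl)))"

lemma next_size_weight_nonneg: "next_size_weight \<theta> Hs k M s \<ge> 0"
proof -
  obtain act sl disc where "s = (act, sl, disc)" by (cases s)
  then show ?thesis
    using size_weight_pos[of \<theta> Hs k]
    by (cases act) (auto simp: next_size_weight_def less_imp_le intro!: sum_nonneg divide_nonneg_nonneg)
qed

lemma nn_integral_explore_step:
  assumes "finite sl"
  shows "(\<integral>\<^sup>+ s'. size_weight \<theta> Hs k (snd (snd s')) \<partial>explore_step Hs M (act, sl, disc))
           = next_size_weight \<theta> Hs k M (act, sl, disc)"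
proof (cases act)
  case (Cons a act')
  then show ?thesis by (simp add: explore_step_active next_size_weight_def Let_def)
next
  case Nil
  show ?thesis
  proof (cases "sl = {}")
    case True
    then show ?thesis using Nil by (simp add: explore_step_idle next_size_weight_def)
  next
    case False
    have card_pos: "real (card sl) > 0" using False assms by (simp add: card_gt_0_iff)
    have "(\<integral>\<^sup>+ h. size_weight \<theta> Hs k (disc @ [fst h]) \<partial>pmf_of_set sl)
            = (\<Sum>h\<in>sl. ennreal (size_weight \<theta> Hs k (disc @ [fst h]))) / card sl"
      using False assms by (rule nn_integral_pmf_of_set)
    also have "\<dots> = ennreal ((\<Sum>h\<in>sl. size_weight \<theta> Hs k (disc @ [fst h])) / card sl)"
      using card_pos
      by (simp add: sum_ennreal less_imp_le[OF size_weight_pos] ennreal_of_nat_eq_real_of_nat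
          divide_ennreal sum_nonneg)
    finally have "(\<integral>\<^sup>+ h. size_weight \<theta> Hs k (disc @ [fst h]) \<partial>pmf_of_set sl)
            = ennreal ((\<Sum>h\<in>sl. size_weight \<theta> Hs k (disc @ [fst h])) / card sl)" .
    then show ?thesis
      using Nil False by (simp add: explore_step_restart restart_state_def next_size_weight_def)
  qed
qed

definition degree_sums_le :: "(nat \<Rightarrow> community) \<Rightarrow> nat \<Rightarrow> nat \<Rightarrow> real \<Rightarrow> bool" where
  "degree_sums_le Hs N k R \<longleftrightarrow> (\<forall>D\<subseteq>{..<N}. card D \<le> k \<longrightarrow> real (\<Sum>c\<in>D. cdeg (Hs c)) \<le> R)"

definition moment_ratio :: "real \<Rightarrow> real \<Rightarrow> (nat \<Rightarrow> community) \<Rightarrow> nat \<Rightarrow> real" where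
  "moment_ratio \<theta> R Hs N = 1 + (\<Sum>h\<in>hcm_hedges Hs N. exp (\<theta> * real (csize (Hs (fst h)))) - 1)
                                / (real (card (hcm_hedges Hs N)) - R)"

lemma moment_ratio_ge_1:
  fixes \<theta> R :: real
  assumes "\<theta> \<ge> 0" "R < card (hcm_hedges Hs N)"
  shows "moment_ratio \<theta> R Hs N \<ge> 1"
  using assms unfolding moment_ratio_def by (simp add: sum_nonneg)

(* While at most k communities are discovered, at least card (hcm_hedges Hs N) - R half-edges
   sleep, and the excess weight of the sleeping ones is at most that of all half-edges. *)
lemma mean_sleeping_weight_le:
  assumes \<theta>: "\<theta> \<ge> 0" and sl: "sl = {x \<in> hcm_hedges Hs N. fst x \<notin> set disc}"
    and len: "length disc \<le> k" and R: "degree_sums_le Hs N k R" "R < card (hcm_hedges Hs N)"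
  shows "mean_sleeping_weight \<theta> Hs sl \<le> moment_ratio \<theta> R Hs N"
proof -
  let ?A = "hcm_hedges Hs N" and ?e = "\<lambda>h. exp (\<theta> * csize (Hs (fst h)))"
  define B where "B = (\<Sum>h\<in>?A. ?e h - 1)"
  have sl_sub: "sl \<subseteq> ?A" and fin: "finite sl" using sl by auto
  have "card (set disc \<inter> {..<N}) \<le> k"
    using len card_length[of disc] card_mono[of "set disc" "set disc \<inter> {..<N}"] by simp
  then have "real (\<Sum>c\<in>set disc \<inter> {..<N}. cdeg (Hs c)) \<le> R"
    using R(1) unfolding degree_sums_le_def by (meson inf_le2)
  moreover have "?A - sl = {h \<in> ?A. fst h \<in> set disc}" using sl by blast
  ultimately have "real (card (?A - sl)) \<le> R"
    using card_hcm_hedges_discovered[of Hs N "set disc"] by (metis of_nat_le_iff order_trans)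
  moreover have "card (?A - sl) = card ?A - card sl" "card sl \<le> card ?A"
    using sl_sub fin by (simp_all add: card_Diff_subset card_mono)
  ultimately have card_sl: "card ?A - R \<le> card sl" by (simp add: of_nat_diff)
  have pos: "card ?A - R > 0" using R(2) by simp
  have B_nonneg: "B \<ge> 0" unfolding B_def using \<theta> by (intro sum_nonneg) simp
  have "(\<Sum>h\<in>sl. ?e h) = card sl + (\<Sum>h\<in>sl. ?e h - 1)" by (simp add: sum_subtractf)
  also have "(\<Sum>h\<in>sl. ?e h - 1) \<le> B"
    unfolding B_def using sl_sub \<theta> by (intro sum_mono2) auto
  finally have "(\<Sum>h\<in>sl. ?e h) \<le> card sl + B" by simp
  moreover have "real (card sl) > 0" using card_sl pos by linarith
  ultimately have "mean_sleeping_weight \<theta> Hs sl \<le> 1 + B / card sl"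
    unfolding mean_sleeping_weight_def by (simp add: field_simps)
  also have "\<dots> \<le> 1 + B / (card ?A - R)"
    using card_sl pos B_nonneg by (simp add: frac_le)
  finally show ?thesis by (simp add: moment_ratio_def B_def)
qed

lemma next_size_weight_active:
  "length disc < k \<Longrightarrow> next_size_weight \<theta> Hs k M (a # act, sl, disc)
     = size_weight \<theta> Hs k disc * exp (\<theta> * csize (Hs (fst (M a))))"
  by (simp add: next_size_weight_def size_weight_snoc)

lemma next_size_weight_restart:
  "length disc < k \<Longrightarrow> sl \<noteq> {} \<Longrightarrow> next_size_weight \<theta> Hs k M ([], sl, disc)
     = size_weight \<theta> Hs k disc * mean_sleeping_weight \<theta> Hs sl"
  by (simp add: next_size_weight_def size_weight_snoc mean_sleeping_weight_def sum_distrib_left)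

lemma next_size_weight_stuck:
  assumes "\<not> length disc < k \<or> act = [] \<and> sl = {}" "finite sl"
  shows "next_size_weight \<theta> Hs k M (act, sl, disc) = size_weight \<theta> Hs k disc"
proof (cases act)
  case Nil
  then show ?thesis
    using assms by (cases "sl = {}") (simp_all add: next_size_weight_def size_weight_snoc)
qed (use assms in \<open>simp add: next_size_weight_def size_weight_snoc\<close>)

lemma sum_nn_integral_pmf:
  fixes p :: "'i \<Rightarrow> 's pmf"
  assumes "finite I" "\<And>i s. f i s \<ge> 0"
  shows "(\<Sum>i\<in>I. \<integral>\<^sup>+ s. ennreal (f i s) \<partial>p i)
           = (\<integral>\<^sup>+ s. ennreal (\<Sum>i\<in>I. pmf (p i) s * f i s) \<partial>count_space UNIV)"
proof -
  have "(\<Sum>i\<in>I. \<integral>\<^sup>+ s. ennreal (f i s) \<partial>p i)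
          = (\<Sum>i\<in>I. \<integral>\<^sup>+ s. ennreal (pmf (p i) s * f i s) \<partial>count_space UNIV)"
    by (simp add: nn_integral_measure_pmf ennreal_mult assms(2))
  also have "\<dots> = (\<integral>\<^sup>+ s. (\<Sum>i\<in>I. ennreal (pmf (p i) s * f i s)) \<partial>count_space UNIV)"
    by (rule nn_integral_sum[symmetric]) simp
  finally show ?thesis by (simp add: sum_ennreal assms(2))
qed

definition matching_moment :: "real \<Rightarrow> (nat \<Rightarrow> community) \<Rightarrow> nat \<Rightarrow> nat \<Rightarrow> nat \<Rightarrow> ennreal" where
  "matching_moment \<theta> Hs N k j = (\<Sum>M\<in>perfect_matchings (hcm_hedges Hs N).
      \<integral>\<^sup>+ s. size_weight \<theta> Hs k (snd (snd s)) \<partial>explore_iter Hs N j M)"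

context
  fixes \<theta> R :: real and Hs N k
  assumes \<theta>: "\<theta> \<ge> 0" and R: "degree_sums_le Hs N k R" "R < card (hcm_hedges Hs N)"
begin

lemma sum_next_size_weight_le:
  fixes s :: expl_state
  defines "PM \<equiv> perfect_matchings (hcm_hedges Hs N)"
  shows "(\<Sum>M\<in>PM. pmf (explore_iter Hs N j M) s * next_size_weight \<theta> Hs k M s)
           \<le> (if j < k then moment_ratio \<theta> R Hs N else 1)
               * ((\<Sum>M\<in>PM. pmf (explore_iter Hs N j M) s) * size_weight \<theta> Hs k (snd (snd s)))"
proof (cases "\<exists>M\<in>PM. s \<in> set_pmf (explore_iter Hs N j M)")
  case False
  then show ?thesis by (simp add: set_pmf_eq)
next
  case True
  let ?A = "hcm_hedges Hs N" and ?q = "moment_ratio \<theta> R Hs N"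
  define w where "w M = pmf (explore_iter Hs N j M) s" for M
  obtain act sl disc where s: "s = (act, sl, disc)" by (cases s)
  define F where "F = size_weight \<theta> Hs k disc"
  have w_nonneg: "(\<Sum>M\<in>PM. w M) \<ge> 0" by (simp add: w_def sum_nonneg)
  have F_pos: "F > 0" by (simp add: F_def size_weight_pos)
  have q: "?q \<ge> 1" using moment_ratio_ge_1[OF \<theta> R(2)] .
  from True obtain M0 where M0: "M0 \<in> PM" "w M0 \<noteq> 0" by (auto simp: w_def set_pmf_eq)
  then have "explore_inv Hs N M0 j s"
    using explore_iter_inv by (simp add: PM_def w_def set_pmf_eq)
  then have sl: "sl = {x \<in> ?A. fst x \<notin> set disc}"
    and len: "length disc = j \<or> act = [] \<and> sl = {} \<and> length disc \<le> j"
    unfolding s explore_inv_def prod.case by blast+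
  have fin_sl: "finite sl" using sl by simp
  have mean_le: "mean_sleeping_weight \<theta> Hs sl \<le> ?q" if "length disc < k"
    using mean_sleeping_weight_le[OF \<theta> sl _ R] that by simp
  consider (stuck) "\<not> length disc < k \<or> act = [] \<and> sl = {}"
    | (restart) "length disc < k" "act = []" "sl \<noteq> {}"
    | (active) a act' where "length disc < k" "act = a # act'"
    by (cases act) auto
  then have "(\<Sum>M\<in>PM. w M * next_size_weight \<theta> Hs k M s)
               \<le> (if j < k then ?q else 1) * ((\<Sum>M\<in>PM. w M) * F)"
  proof cases
    case stuck
    then have "(\<Sum>M\<in>PM. w M * next_size_weight \<theta> Hs k M s) = (\<Sum>M\<in>PM. w M) * F"
      by (simp add: s F_def next_size_weight_stuck fin_sl sum_distrib_right)
    moreover have "(if j < k then ?q else 1) \<ge> 1" using q by simp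
    ultimately show ?thesis
      using mult_right_mono[of 1 "if j < k then ?q else 1" "(\<Sum>M\<in>PM. w M) * F"] w_nonneg F_pos
      by simp
  next
    case restart
    then have "(\<Sum>M\<in>PM. w M * next_size_weight \<theta> Hs k M s)
                 = mean_sleeping_weight \<theta> Hs sl * ((\<Sum>M\<in>PM. w M) * F)"
      by (simp add: s F_def next_size_weight_restart sum_distrib_left sum_distrib_right mult_ac)
    also have "\<dots> \<le> ?q * ((\<Sum>M\<in>PM. w M) * F)"
      using mean_le restart w_nonneg F_pos by (intro mult_right_mono) simp_all
    finally show ?thesis using restart len by simp
  next
    case active
    have "(\<Sum>M\<in>PM. w M * exp (\<theta> * csize (Hs (fst (M a)))))
            = mean_sleeping_weight \<theta> Hs sl * (\<Sum>M\<in>PM. w M)"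
      using sum_active_partner_uniform[where Hs = Hs and N = N and j = j and act = act',
          OF M0(1)[unfolded PM_def] M0(2)[unfolded w_def s active]]
      by (simp add: w_def PM_def s active mean_sleeping_weight_def)
    moreover have "(\<Sum>M\<in>PM. w M * next_size_weight \<theta> Hs k M s)
                     = F * (\<Sum>M\<in>PM. w M * exp (\<theta> * csize (Hs (fst (M a)))))"
      using active by (simp add: s F_def next_size_weight_active sum_distrib_left mult_ac)
    ultimately have "(\<Sum>M\<in>PM. w M * next_size_weight \<theta> Hs k M s)
                 = mean_sleeping_weight \<theta> Hs sl * ((\<Sum>M\<in>PM. w M) * F)"
      by simp
    also have "\<dots> \<le> ?q * ((\<Sum>M\<in>PM. w M) * F)"
      using mean_le active w_nonneg F_pos by (intro mult_right_mono) simp_all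
    finally show ?thesis using active len by simp
  qed
  then show ?thesis by (simp add: w_def F_def s)
qed

lemma matching_moment_Suc:
  "matching_moment \<theta> Hs N k (Suc j) \<le> ennreal (if j < k then moment_ratio \<theta> R Hs N else 1) * matching_moment \<theta> Hs N k j"
proof -
  let ?PM = "perfect_matchings (hcm_hedges Hs N)" and ?Q = "if j < k then moment_ratio \<theta> R Hs N else 1"
  have fin: "finite ?PM" by (simp add: finite_perfect_matchings)
  have Q: "?Q \<ge> 0" using moment_ratio_ge_1[OF \<theta> R(2)] by simp
  have "(\<integral>\<^sup>+ s. size_weight \<theta> Hs k (snd (snd s)) \<partial>explore_iter Hs N (Suc j) M)
          = (\<integral>\<^sup>+ s. next_size_weight \<theta> Hs k M s \<partial>explore_iter Hs N j M)" if M: "M \<in> ?PM" for M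
    unfolding explore_iter_Suc nn_integral_bind_pmf
  proof (intro nn_integral_cong_AE AE_pmfI)
    fix s assume s: "s \<in> set_pmf (explore_iter Hs N j M)"
    obtain act sl disc where s_eq: "s = (act, sl, disc)" by (cases s)
    have "finite sl" using explore_iter_inv[OF M s] by (simp add: s_eq explore_inv_def)
    then show "(\<integral>\<^sup>+ s'. size_weight \<theta> Hs k (snd (snd s')) \<partial>explore_step Hs M s)
                 = next_size_weight \<theta> Hs k M s"
      unfolding s_eq by (rule nn_integral_explore_step)
  qed
  then have "matching_moment \<theta> Hs N k (Suc j)
      = (\<integral>\<^sup>+ s. ennreal (\<Sum>M\<in>?PM. pmf (explore_iter Hs N j M) s * next_size_weight \<theta> Hs k M s) \<partial>count_space UNIV)"
    unfolding matching_moment_def using fin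
    by (simp add: sum_nn_integral_pmf next_size_weight_nonneg cong: sum.cong)
  also have "\<dots> \<le> (\<integral>\<^sup>+ s. ennreal ?Q * ennreal (\<Sum>M\<in>?PM. pmf (explore_iter Hs N j M) s * size_weight \<theta> Hs k (snd (snd s))) \<partial>count_space UNIV)"
  proof (intro nn_integral_mono)
    fix s :: expl_state
    have "(\<Sum>M\<in>?PM. pmf (explore_iter Hs N j M) s * next_size_weight \<theta> Hs k M s)
            \<le> ?Q * (\<Sum>M\<in>?PM. pmf (explore_iter Hs N j M) s * size_weight \<theta> Hs k (snd (snd s)))"
      using sum_next_size_weight_le[of j s] by (simp add: sum_distrib_right)
    then show "ennreal (\<Sum>M\<in>?PM. pmf (explore_iter Hs N j M) s * next_size_weight \<theta> Hs k M s)
            \<le> ennreal ?Q * ennreal (\<Sum>M\<in>?PM. pmf (explore_iter Hs N j M) s * size_weight \<theta> Hs k (snd (snd s)))"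
      using Q by (simp add: ennreal_mult[symmetric] sum_nonneg less_imp_le[OF size_weight_pos] ennreal_leI)
  qed
  also have "\<dots> = ennreal ?Q * matching_moment \<theta> Hs N k j"
    unfolding matching_moment_def using fin
    by (simp add: nn_integral_cmult sum_nn_integral_pmf less_imp_le[OF size_weight_pos])
  finally show ?thesis .
qed

lemma matching_moment_le:
  "matching_moment \<theta> Hs N k j \<le> ennreal (moment_ratio \<theta> R Hs N ^ min j k) * card (perfect_matchings (hcm_hedges Hs N))"
proof (induction j)
  case 0
  show ?case by (simp add: matching_moment_def explore_iter_0 size_weight_Nil)
next
  case (Suc j)
  let ?q = "moment_ratio \<theta> R Hs N" and ?Q = "if j < k then moment_ratio \<theta> R Hs N else 1"
  have q: "?q \<ge> 1" using moment_ratio_ge_1[OF \<theta> R(2)] .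
  have "matching_moment \<theta> Hs N k (Suc j) \<le> ennreal ?Q * matching_moment \<theta> Hs N k j"
    by (rule matching_moment_Suc)
  also have "\<dots> \<le> ennreal ?Q * (ennreal (?q ^ min j k) * card (perfect_matchings (hcm_hedges Hs N)))"
    by (rule mult_left_mono[OF Suc.IH]) simp
  also have "\<dots> = ennreal (?Q * ?q ^ min j k) * card (perfect_matchings (hcm_hedges Hs N))"
    using q by (simp add: ennreal_mult mult.assoc)
  also have "?Q * ?q ^ min j k = ?q ^ min (Suc j) k"
    by (cases "j < k") (auto simp: min_def)
  finally show ?case .
qed

end

lemma exploration_tail_bound:
  fixes \<theta> R t :: real
  assumes \<theta>: "\<theta> > 0" and R: "degree_sums_le Hs n k R" "R < card (hcm_hedges Hs n)"
    and even: "even (card (hcm_hedges Hs n))"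
  shows "measure_pmf.prob (hcm_exploration Hs n) {d. real (first_sizes_sum Hs k d) > t}
           \<le> moment_ratio \<theta> R Hs n ^ k * exp (- \<theta> * t)"
proof -
  let ?PM = "perfect_matchings (hcm_hedges Hs n)" and ?q = "moment_ratio \<theta> R Hs n"
  let ?X = "\<lambda>d. real (first_sizes_sum Hs k d)"
  have fin: "finite ?PM" by (simp add: finite_perfect_matchings)
  have ne: "?PM \<noteq> {}" using even by (simp add: perfect_matchings_nonempty)
  have q: "?q \<ge> 1" using moment_ratio_ge_1[OF _ R(2)] \<theta> by simp
  have "(\<integral>\<^sup>+ d. exp (\<theta> * ?X d) \<partial>hcm_exploration Hs n)
          = matching_moment \<theta> Hs n k n / card ?PM"
    unfolding hcm_exploration_def
    by (simp add: nn_integral_pmf_of_set[OF ne fin] matching_moment_def explore_dist_eq_explore_iter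
        size_weight_def)
  also have "\<dots> \<le> ennreal (?q ^ min n k) * card ?PM / card ?PM"
    using matching_moment_le[OF less_imp_le[OF \<theta>] R] by (rule divide_right_mono_ennreal)
  also have "\<dots> = ennreal (?q ^ min n k)"
    using fin ne by (intro mult_divide_eq_ennreal) (auto simp: card_gt_0_iff)
  also have "\<dots> \<le> ennreal (?q ^ k)"
    using q by (intro ennreal_leI power_increasing) auto
  finally have moment: "(\<integral>\<^sup>+ d. exp (\<theta> * ?X d) \<partial>hcm_exploration Hs n) \<le> ?q ^ k" .
  have "emeasure (hcm_exploration Hs n) {d. ?X d > t} \<le> emeasure (hcm_exploration Hs n) {d \<in> UNIV. ?X d \<ge> t}"
    by (intro emeasure_mono) auto
  also have "\<dots> \<le> ennreal (exp (- \<theta> * t)) * (\<integral>\<^sup>+ d. exp (\<theta> * ?X d) \<partial>hcm_exploration Hs n)"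
    using Chernoff_ineq_nn_integral_ge[OF \<theta>, of UNIV "hcm_exploration Hs n" ?X t] by simp
  also have "\<dots> \<le> ennreal (exp (- \<theta> * t)) * ennreal (?q ^ k)"
    by (rule mult_left_mono[OF moment]) simp
  finally show ?thesis
    using q by (simp add: measure_pmf.emeasure_eq_measure ennreal_mult[symmetric] mult.commute)
qed

subsection \<open>Explicit bounds for finite n\<close>

lemma le_add_cube_div_sq:
  fixes d K :: real
  assumes "d \<ge> 0" "K > 0"
  shows "d \<le> K + d ^ 3 / K\<^sup>2"
proof (cases "d \<le> K")
  case True
  moreover have "d ^ 3 / K\<^sup>2 \<ge> 0" using assms by simp
  ultimately show ?thesis by linarith
next
  case False
  then have "d * K\<^sup>2 \<le> d * d\<^sup>2" using assms by (intro mult_left_mono power_mono) simp_all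
  then have "d \<le> d ^ 3 / K\<^sup>2" using assms by (simp add: field_simps power2_eq_square power3_eq_cube)
  then show ?thesis using assms by linarith
qed

(* Truncating the degrees at K splits the degree of any k communities into k K plus a
   third-moment remainder. *)
lemma degree_sums_le_cube:
  fixes K :: real
  assumes "K > 0"
  shows "degree_sums_le Hs n k (real k * K + (\<Sum>i<n. real (cdeg (Hs i)) ^ 3) / K\<^sup>2)"
  unfolding degree_sums_le_def
proof (intro allI impI)
  fix D assume D: "D \<subseteq> {..<n}" "card D \<le> k"
  let ?d = "\<lambda>i. real (cdeg (Hs i))"
  have "real (\<Sum>c\<in>D. cdeg (Hs c)) \<le> (\<Sum>c\<in>D. K + ?d c ^ 3 / K\<^sup>2)"
    using assms by (simp add: sum_mono le_add_cube_div_sq)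
  also have "\<dots> = card D * K + (\<Sum>c\<in>D. ?d c ^ 3) / K\<^sup>2"
    by (simp add: sum.distrib sum_divide_distrib)
  also have "\<dots> \<le> real k * K + (\<Sum>i<n. ?d i ^ 3) / K\<^sup>2"
    using D assms by (intro add_mono mult_right_mono divide_right_mono sum_mono2) auto
  finally show "real (\<Sum>c\<in>D. cdeg (Hs c)) \<le> real k * K + (\<Sum>i<n. ?d i ^ 3) / K\<^sup>2" .
qed

lemma exp_minus_one_le_twice:
  fixes x :: real
  assumes "0 \<le> x" "x \<le> 1"
  shows "exp x - 1 \<le> 2 * x"
proof -
  have "exp x \<le> 1 + x + x\<^sup>2" by (rule exp_bound[OF assms])
  moreover have "x\<^sup>2 \<le> x" using assms by (simp add: power2_eq_square mult_left_le)
  ultimately show ?thesis by simp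
qed

lemma moment_ratio_le_exp:
  fixes \<theta> R :: real
  assumes \<theta>: "\<theta> \<ge> 0" "\<And>i. i < n \<Longrightarrow> \<theta> * csize (Hs i) \<le> 1" and R: "R < card (hcm_hedges Hs n)"
  shows "moment_ratio \<theta> R Hs n
           \<le> exp (2 * \<theta> * (\<Sum>i<n. real (cdeg (Hs i)) * real (csize (Hs i))) / (card (hcm_hedges Hs n) - R))"
proof -
  let ?B = "\<Sum>h\<in>hcm_hedges Hs n. exp (\<theta> * real (csize (Hs (fst h)))) - 1"
  have "?B = (\<Sum>i<n. real (cdeg (Hs i)) * (exp (\<theta> * csize (Hs i)) - 1))"
    by (rule sum_hcm_hedges_fst)
  also have "\<dots> \<le> (\<Sum>i<n. real (cdeg (Hs i)) * (2 * (\<theta> * csize (Hs i))))"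
    using \<theta> by (intro sum_mono mult_left_mono exp_minus_one_le_twice) auto
  finally have "?B \<le> 2 * \<theta> * (\<Sum>i<n. real (cdeg (Hs i)) * real (csize (Hs i)))"
    by (simp add: sum_distrib_left mult_ac)
  then have "moment_ratio \<theta> R Hs n
               \<le> 1 + 2 * \<theta> * (\<Sum>i<n. real (cdeg (Hs i)) * real (csize (Hs i))) / (card (hcm_hedges Hs n) - R)"
    unfolding moment_ratio_def using R by (simp add: divide_right_mono)
  also have "\<dots> \<le> exp (2 * \<theta> * (\<Sum>i<n. real (cdeg (Hs i)) * real (csize (Hs i))) / (card (hcm_hedges Hs n) - R))"
    by (rule exp_ge_add_one_self)
  finally show ?thesis .
qed

lemma hcm_smax_ge:
  assumes "\<forall>i<n. is_community (Hs i)" "i < n"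
  shows "csize (Hs i) \<le> hcm_smax Hs n" "hcm_smax Hs n \<ge> 1"
proof -
  show le: "csize (Hs i) \<le> hcm_smax Hs n"
    unfolding hcm_smax_def using assms(2) by (intro Max_ge) auto
  have "csize (Hs i) \<ge> 1" using assms by (simp add: is_community_def)
  then show "hcm_smax Hs n \<ge> 1" using le by simp
qed

definition degree_budget :: "(nat \<Rightarrow> community) \<Rightarrow> nat \<Rightarrow> nat \<Rightarrow> real \<Rightarrow> real" where
  "degree_budget Hs n k K = real k * K + (\<Sum>i<n. real (cdeg (Hs i)) ^ 3) / K\<^sup>2"

theorem hcm_exploration_tail_bound:
  fixes K t :: real
  assumes n: "n > 0" and comm: "\<forall>i<n. is_community (Hs i)" and even: "even (\<Sum>i<n. cdeg (Hs i))"
    and K: "K > 0" and budget: "degree_budget Hs n k K < card (hcm_hedges Hs n)"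
  shows "measure_pmf.prob (hcm_exploration Hs n) {d. real (first_sizes_sum Hs k d) > t}
           \<le> exp ((2 * real k * (\<Sum>i<n. real (cdeg (Hs i)) * real (csize (Hs i)))
                     / (card (hcm_hedges Hs n) - degree_budget Hs n k K) - t) / real (hcm_smax Hs n))"
proof -
  define \<theta> where "\<theta> = 1 / real (hcm_smax Hs n)"
  let ?L = "real (card (hcm_hedges Hs n))" and ?R = "degree_budget Hs n k K"
  let ?DS = "\<Sum>i<n. real (cdeg (Hs i)) * real (csize (Hs i))"
  have smax: "real (hcm_smax Hs n) \<ge> 1" using hcm_smax_ge(2)[OF comm n] by simp
  have \<theta>: "\<theta> > 0" "\<And>i. i < n \<Longrightarrow> \<theta> * csize (Hs i) \<le> 1"
    using smax hcm_smax_ge(1)[OF comm] by (auto simp: \<theta>_def field_simps)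
  have "measure_pmf.prob (hcm_exploration Hs n) {d. real (first_sizes_sum Hs k d) > t}
          \<le> moment_ratio \<theta> ?R Hs n ^ k * exp (- \<theta> * t)"
    using exploration_tail_bound[OF \<theta>(1) degree_sums_le_cube[OF K] _ _, where t = t] budget even
    by (simp add: degree_budget_def card_hcm_hedges)
  also have "\<dots> \<le> exp (2 * \<theta> * ?DS / (?L - ?R)) ^ k * exp (- \<theta> * t)"
    using moment_ratio_le_exp[of \<theta> n Hs ?R] moment_ratio_ge_1[of \<theta> ?R Hs n] \<theta> budget
    by (intro mult_right_mono power_mono) simp_all
  also have "\<dots> = exp (\<theta> * (2 * real k * ?DS / (?L - ?R) - t))"
    by (simp add: exp_of_nat_mult[symmetric] exp_add[symmetric] algebra_simps)
  finally show ?thesis by (simp add: \<theta>_def)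
qed

subsection \<open>Asymptotics\<close>

lemma expectation_gt_finite_sum:
  fixes P :: "'a pmf" and f :: "'a \<Rightarrow> real"
  assumes int: "integrable (measure_pmf P) f" and e: "\<epsilon> > 0"
  shows "\<exists>F. finite F \<and> (\<Sum>C\<in>F. pmf P C * f C) > measure_pmf.expectation P f - \<epsilon>"
proof -
  let ?g = "\<lambda>C. pmf P C * f C"
  have "integrable (count_space UNIV) (\<lambda>x. pmf P x *\<^sub>R f x)"
    using int unfolding measure_pmf_eq_density by (subst (asm) integrable_density) (auto simp: pmf_nonneg)
  then have abs: "Infinite_Set_Sum.abs_summable_on ?g UNIV" by (simp add: abs_summable_on_def)
  have "measure_pmf.expectation P f = infsum ?g UNIV"
    by (simp add: pmf_expectation_eq_infsetsum infsetsum_infsum[OF abs])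
  moreover have "?g summable_on UNIV"
    by (rule abs_summable_summable, rule abs_summable_equivalent[THEN iffD2, OF abs])
  ultimately have lim: "(sum ?g \<longlongrightarrow> measure_pmf.expectation P f) (finite_subsets_at_top UNIV)"
    using has_sum_infsum unfolding has_sum_def by metis
  have "\<forall>\<^sub>F F in finite_subsets_at_top UNIV. sum ?g F > measure_pmf.expectation P f - \<epsilon>"
    using order_tendstoD(1)[OF lim] e by simp
  then show ?thesis unfolding eventually_finite_subsets_at_top by blast
qed

lemma emp_mean_ge_finite_sum:
  fixes f :: "community \<Rightarrow> real"
  assumes "finite F" "\<And>C. f C \<ge> 0"
  shows "(\<Sum>C\<in>F. f C * (real (card {i. i < n \<and> Hs i = C}) / real n)) \<le> emp_mean Hs n f"
proof -
  let ?S = "{i. i < n \<and> Hs i \<in> F}"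
  have "(\<Sum>C\<in>F. f C * real (card {i. i < n \<and> Hs i = C})) = (\<Sum>C\<in>F. \<Sum>i\<in>{i \<in> ?S. Hs i = C}. f (Hs i))"
    by (intro sum.cong) (auto intro!: arg_cong[where f = card])
  also have "\<dots> = (\<Sum>i\<in>?S. f (Hs i))"
    using assms(1) by (intro sum.group) auto
  also have "\<dots> \<le> (\<Sum>i<n. f (Hs i))"
    using assms(2) by (intro sum_mono2) auto
  finally show ?thesis
    unfolding emp_mean_def by (simp add: sum_divide_distrib[symmetric] divide_right_mono)
qed

lemma eventually_emp_mean_gt:
  fixes H :: "nat \<Rightarrow> nat \<Rightarrow> community" and P :: "community pmf" and f :: "community \<Rightarrow> real"
  assumes freq: "\<forall>C. (\<lambda>n. real (card {i. i < n \<and> H n i = C}) / real n) \<longlonglongrightarrow> pmf P C"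
    and int: "integrable (measure_pmf P) f" and nonneg: "\<And>C. f C \<ge> 0" and e: "\<epsilon> > 0"
  shows "\<forall>\<^sub>F n in sequentially. emp_mean (H n) n f > measure_pmf.expectation P f - \<epsilon>"
proof -
  obtain F where F: "finite F" "(\<Sum>C\<in>F. pmf P C * f C) > measure_pmf.expectation P f - \<epsilon>"
    using expectation_gt_finite_sum[OF int e] by blast
  have "(\<lambda>n. \<Sum>C\<in>F. f C * (real (card {i. i < n \<and> H n i = C}) / real n)) \<longlonglongrightarrow> (\<Sum>C\<in>F. f C * pmf P C)"
    using freq by (intro tendsto_sum tendsto_mult_left) blast
  then have "\<forall>\<^sub>F n in sequentially.
               (\<Sum>C\<in>F. f C * (real (card {i. i < n \<and> H n i = C}) / real n)) > measure_pmf.expectation P f - \<epsilon>"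
    using F(2) by (intro order_tendstoD(1)) (simp_all add: mult.commute)
  then show ?thesis
  proof eventually_elim
    case (elim n)
    have "(\<Sum>C\<in>F. f C * (real (card {i. i < n \<and> H n i = C}) / real n)) \<le> emp_mean (H n) n f"
      using F(1) nonneg by (rule emp_mean_ge_finite_sum)
    then show ?case using elim by linarith
  qed
qed

lemma sum_eq_emp_mean: "n > 0 \<Longrightarrow> (\<Sum>i<n. f (Hs i)) = real n * emp_mean Hs n f"
  by (simp add: emp_mean_def)

lemma tail_exponent_le:
  fixes L R DS \<eta> \<mu> \<nu> \<epsilon> p :: real and k n :: nat
  assumes n: "n > 0" and k: "real k \<le> \<eta> * p" and p: "p \<ge> 0" and \<eta>: "\<eta> \<ge> 0"
    and R: "R \<le> real n * \<epsilon>" and L: "L > real n * (\<nu> - \<epsilon>)" and \<epsilon>: "2 * \<epsilon> < \<nu>"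
    and DS: "0 \<le> DS" "DS \<le> real n * (\<mu> + \<epsilon>)"
  shows "R < L" and "2 * real k * DS / (L - R) \<le> p * (2 * \<eta> * (\<mu> + \<epsilon>) / (\<nu> - 2 * \<epsilon>))"
proof -
  have gap: "L - R > real n * (\<nu> - 2 * \<epsilon>)" using R L by (simp add: algebra_simps)
  moreover have pos: "real n * (\<nu> - 2 * \<epsilon>) > 0" using n \<epsilon> by simp
  ultimately show "R < L" by linarith
  have "real n * (\<mu> + \<epsilon>) \<ge> 0" using DS by linarith
  then have \<mu>: "\<mu> + \<epsilon> \<ge> 0" using n by (simp add: zero_le_mult_iff)
  have "2 * real k * DS / (L - R) \<le> 2 * (\<eta> * p) * (real n * (\<mu> + \<epsilon>)) / (real n * (\<nu> - 2 * \<epsilon>))"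
    using k DS gap pos p \<eta> \<mu> by (intro frac_le mult_mono mult_nonneg_nonneg) simp_all
  also have "\<dots> = (real n * (2 * \<eta> * p * (\<mu> + \<epsilon>))) / (real n * (\<nu> - 2 * \<epsilon>))"
    by (simp add: mult_ac)
  also have "\<dots> = p * (2 * \<eta> * (\<mu> + \<epsilon>) / (\<nu> - 2 * \<epsilon>))"
    using n by (subst mult_divide_mult_cancel_left) simp_all
  finally show "2 * real k * DS / (L - R) \<le> p * (2 * \<eta> * (\<mu> + \<epsilon>) / (\<nu> - 2 * \<epsilon>))" .
qed

lemma exists_margin:
  fixes \<eta> \<mu> \<nu> D :: real
  assumes \<nu>: "\<nu> > 0" and D: "2 * \<eta> * \<mu> / \<nu> < D"
  obtains \<epsilon> where "\<epsilon> > 0" "2 * \<epsilon> < \<nu>" "2 * \<eta> * (\<mu> + \<epsilon>) / (\<nu> - 2 * \<epsilon>) < D"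
proof -
  have "((\<lambda>e. 2 * \<eta> * (\<mu> + e) / (\<nu> - 2 * e)) \<longlongrightarrow> 2 * \<eta> * (\<mu> + 0) / (\<nu> - 2 * 0)) (at_right 0)"
    using \<nu> by (intro tendsto_intros) auto
  then have "\<forall>\<^sub>F e in at_right 0. 2 * \<eta> * (\<mu> + e) / (\<nu> - 2 * e) < D"
    using D by (intro order_tendstoD(2)) simp_all
  then obtain b where b: "b > 0" "\<And>e. e > 0 \<Longrightarrow> e < b \<Longrightarrow> 2 * \<eta> * (\<mu> + e) / (\<nu> - 2 * e) < D"
    unfolding eventually_at_right_field by blast
  show ?thesis
    by (rule that[of "min (b / 2) (\<nu> / 4)"]) (use b \<nu> in auto)
qed

lemma degree_budget_le:
  fixes \<eta> K \<epsilon> :: real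
  assumes n: "n > 0" and k: "real k \<le> \<eta> * real n powr (2/3)" and K: "K \<ge> 0"
    and small_k: "\<eta> * K * real n powr (-1/3) \<le> \<epsilon> / 2"
    and cube: "emp_mean Hs n (\<lambda>C. real (cdeg C) ^ 3) / K\<^sup>2 \<le> \<epsilon> / 2"
  shows "degree_budget Hs n k K \<le> real n * \<epsilon>"
proof -
  have pw: "real n * real n powr (-1/3) = real n powr (2/3)"
    using n by (simp add: powr_add[symmetric] powr_mult_base)
  have "real k * K \<le> \<eta> * real n powr (2/3) * K" using k K by (rule mult_right_mono)
  also have "\<dots> = real n * (\<eta> * K * real n powr (-1/3))" by (simp add: pw[symmetric] mult_ac)
  also have "\<dots> \<le> real n * (\<epsilon> / 2)" using small_k by (intro mult_left_mono) simp_all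
  finally have "real k * K \<le> real n * (\<epsilon> / 2)" .
  moreover have "(\<Sum>i<n. real (cdeg (Hs i)) ^ 3) / K\<^sup>2
                   = real n * (emp_mean Hs n (\<lambda>C. real (cdeg C) ^ 3) / K\<^sup>2)"
    using sum_eq_emp_mean[OF n, of "\<lambda>C. real (cdeg C) ^ 3" Hs] by simp
  moreover have "\<dots> \<le> real n * (\<epsilon> / 2)" using cube by (intro mult_left_mono) simp_all
  ultimately show ?thesis unfolding degree_budget_def by linarith
qed

lemma eventually_tail_exponent:
  fixes H :: "nat \<Rightarrow> nat \<Rightarrow> community" and \<eta> \<mu> \<nu> M3 D :: real
  assumes \<eta>: "\<eta> > 0" and \<nu>: "\<nu> > 0"
    and DS: "(\<lambda>n. emp_mean (H n) n (\<lambda>C. real (cdeg C) * real (csize C))) \<longlonglongrightarrow> \<mu>"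
    and deg: "\<And>\<epsilon>. \<epsilon> > 0 \<Longrightarrow> \<forall>\<^sub>F n in sequentially. emp_mean (H n) n (\<lambda>C. real (cdeg C)) > \<nu> - \<epsilon>"
    and cube: "(\<lambda>n. emp_mean (H n) n (\<lambda>C. real (cdeg C) ^ 3)) \<longlonglongrightarrow> M3"
    and D: "2 * \<eta> * \<mu> / \<nu> < D"
  defines "k n \<equiv> nat \<lfloor>\<eta> * real n powr (2/3)\<rfloor>"
  shows "\<exists>K>0. \<forall>\<^sub>F n in sequentially.
           degree_budget (H n) n (k n) K < card (hcm_hedges (H n) n)
         \<and> 2 * real (k n) * (\<Sum>i<n. real (cdeg (H n i)) * real (csize (H n i)))
             / (card (hcm_hedges (H n) n) - degree_budget (H n) n (k n) K) \<le> D * real n powr (2/3)"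
proof -
  obtain \<epsilon> where \<epsilon>: "\<epsilon> > 0" "2 * \<epsilon> < \<nu>" "2 * \<eta> * (\<mu> + \<epsilon>) / (\<nu> - 2 * \<epsilon>) < D"
    using exists_margin[OF \<nu> D] .
  define C where "C = max 1 (M3 + 1)"
  define K where "K = max 1 (2 * C / \<epsilon>)"
  have "2 * C / \<epsilon> \<le> K" by (simp add: K_def)
  then have K: "K \<ge> 1" "2 * C \<le> K * \<epsilon>" using \<epsilon>(1) by (simp add: K_def, simp add: divide_le_eq)
  have C_K: "C / K\<^sup>2 \<le> \<epsilon> / 2"
  proof -
    have "C / K\<^sup>2 \<le> C / K" using K by (intro divide_left_mono) (auto simp: C_def power2_eq_square)
    also have "\<dots> \<le> \<epsilon> / 2" using K by (simp add: field_simps)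
    finally show ?thesis .
  qed
  have "(\<lambda>n. \<eta> * K * real n powr (-1/3)) \<longlonglongrightarrow> \<eta> * K * 0"
    by (intro tendsto_mult_left tendsto_neg_powr) (simp_all add: filterlim_real_sequentially)
  from order_tendstoD(2)[OF this, of "\<epsilon> / 2"]
  have small_k: "\<forall>\<^sub>F n in sequentially. \<eta> * K * real n powr (-1/3) < \<epsilon> / 2"
    using \<epsilon> by simp
  have "\<forall>\<^sub>F n in sequentially. emp_mean (H n) n (\<lambda>C. real (cdeg C) ^ 3) < C"
    using order_tendstoD(2)[OF cube, of C] by (simp add: C_def)
  moreover have "\<forall>\<^sub>F n in sequentially. emp_mean (H n) n (\<lambda>C. real (cdeg C) * real (csize C)) < \<mu> + \<epsilon>"
    using order_tendstoD(2)[OF DS] \<epsilon> by simp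
  ultimately have "\<forall>\<^sub>F n in sequentially.
           degree_budget (H n) n (k n) K < card (hcm_hedges (H n) n)
         \<and> 2 * real (k n) * (\<Sum>i<n. real (cdeg (H n i)) * real (csize (H n i)))
             / (card (hcm_hedges (H n) n) - degree_budget (H n) n (k n) K) \<le> D * real n powr (2/3)"
    using deg[OF \<epsilon>(1)] small_k eventually_gt_at_top[of 0]
  proof eventually_elim
    case (elim n)
    let ?p = "real n powr (2/3)"
    have p: "?p \<ge> 0" by simp
    have k: "real (k n) \<le> \<eta> * ?p" using \<eta> by (simp add: k_def)
    have "emp_mean (H n) n (\<lambda>C. real (cdeg C) ^ 3) / K\<^sup>2 \<le> \<epsilon> / 2"
      using divide_right_mono[OF less_imp_le[OF elim(1)] zero_le_power2[of K]] C_K by linarith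
    then have R: "degree_budget (H n) n (k n) K \<le> real n * \<epsilon>"
      using degree_budget_le[OF elim(5) k _ less_imp_le[OF elim(4)]] K(1) by simp
    have L: "real (card (hcm_hedges (H n) n)) > real n * (\<nu> - \<epsilon>)"
      using elim(3,5) sum_eq_emp_mean[OF elim(5), of "\<lambda>C. real (cdeg C)" "H n"]
      by (simp add: card_hcm_hedges)
    have DS: "0 \<le> (\<Sum>i<n. real (cdeg (H n i)) * real (csize (H n i)))"
      "(\<Sum>i<n. real (cdeg (H n i)) * real (csize (H n i))) \<le> real n * (\<mu> + \<epsilon>)"
      by (simp add: sum_nonneg)
        (use elim(2,5) sum_eq_emp_mean[OF elim(5), of "\<lambda>C. real (cdeg C) * real (csize C)" "H n"] in simp)
    note bounds = tail_exponent_le[OF elim(5) k p less_imp_le[OF \<eta>] R L \<epsilon>(2) DS]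
    show ?case
      using bounds(1) order_trans[OF bounds(2) mult_left_mono[OF less_imp_le[OF \<epsilon>(3)] p]]
      by (simp add: mult.commute)
  qed
  then show ?thesis using K by (intro exI[of _ K]) simp
qed

lemma integrable_of_cube:
  fixes f :: "'a \<Rightarrow> nat"
  assumes "integrable (measure_pmf P) (\<lambda>x. real (f x) ^ 3)"
  shows "integrable (measure_pmf P) (\<lambda>x. real (f x))"
proof (rule Bochner_Integration.integrable_bound[OF assms])
  have "f x \<le> f x ^ 3" for x
    by (cases "f x") (simp_all add: power3_eq_cube)
  then have "real (f x) \<le> real (f x) ^ 3" for x
    by (metis of_nat_le_iff of_nat_power)
  then show "AE x in measure_pmf P. norm (real (f x)) \<le> norm (real (f x) ^ 3)" by simp
qed simp

lemma expectation_pos_of_prob_zero_lt_1: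
  fixes f :: "'a \<Rightarrow> nat"
  assumes int: "integrable (measure_pmf P) (\<lambda>x. real (f x))" and nz: "measure_pmf.prob P {x. f x = 0} < 1"
  shows "measure_pmf.expectation P (\<lambda>x. real (f x)) > 0"
proof -
  have "{x. f x \<noteq> 0} = space (measure_pmf P) - {x. f x = 0}" by auto
  then have "measure_pmf.prob P {x. f x \<noteq> 0} = 1 - measure_pmf.prob P {x. f x = 0}"
    using measure_pmf.prob_compl[of "{x. f x = 0}" P] by simp
  also have "\<dots> > 0" using nz by simp
  finally have "0 < measure_pmf.expectation P (indicator {x. f x \<noteq> 0} :: 'a \<Rightarrow> real)" by simp
  also have "\<dots> \<le> measure_pmf.expectation P (\<lambda>x. real (f x))"
    by (rule integral_mono[OF _ int])
      (auto simp: indicator_def measure_pmf.emeasure_eq_measure intro!: integrable_real_indicator)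
  finally show ?thesis .
qed

theorem lemma2p3:
  fixes H :: "nat \<Rightarrow> nat \<Rightarrow> community" and P :: "community pmf" and \<eta> \<delta> :: real
  assumes comm: "\<forall>n. \<forall>i<n. is_community (H n i)"
    and even_tot: "\<forall>n. even (\<Sum>i<n. cdeg (H n i))"
    \<comment> \<open>community regularity condition\<close>
    and reg_i: "\<forall>C. (\<lambda>n. real (card {i. i < n \<and> H n i = C}) / real n) \<longlonglongrightarrow> pmf P C"
    and reg_ii_int: "integrable (measure_pmf P) (\<lambda>C. real (csize C))"
    and reg_ii: "(\<lambda>n. emp_mean (H n) n (\<lambda>C. real (csize C)))
                   \<longlonglongrightarrow> measure_pmf.expectation P (\<lambda>C. real (csize C))"
    and reg_iii_int: "integrable (measure_pmf P) (\<lambda>C. real (cdeg C) * real (csize C))"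
    and reg_iii: "(\<lambda>n. emp_mean (H n) n (\<lambda>C. real (cdeg C) * real (csize C)))
                   \<longlonglongrightarrow> measure_pmf.expectation P (\<lambda>C. real (cdeg C) * real (csize C))"
    and reg_iv: "(\<lambda>n. real (hcm_smax (H n) n) * ln (real n) / real n powr (2/3)) \<longlonglongrightarrow> 0"
    \<comment> \<open>inter-community connectivity condition\<close>
    and con_i_int: "integrable (measure_pmf P) (\<lambda>C. real (cdeg C) ^ 3)"
    and con_i: "(\<lambda>n. emp_mean (H n) n (\<lambda>C. real (cdeg C) ^ 3))
                   \<longlonglongrightarrow> measure_pmf.expectation P (\<lambda>C. real (cdeg C) ^ 3)"
    and con_ii0: "measure_pmf.prob P {C. cdeg C = 0} < 1"
    and con_ii1: "0 < measure_pmf.prob P {C. cdeg C = 1}" "measure_pmf.prob P {C. cdeg C = 1} < 1"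
    and con_iii: "\<exists>lam::real. (\<lambda>n. (emp_mean (H n) n (\<lambda>C. real (cdeg C) * (real (cdeg C) - 1))
                                   / emp_mean (H n) n (\<lambda>C. real (cdeg C))
                                 - 1 - lam * real n powr (-1/3)) * real n powr (1/3)) \<longlonglongrightarrow> 0"
    \<comment> \<open>parameters\<close>
    and eta: "\<eta> > 0" and delta: "\<delta> > 0"
    and delta_eta: "\<delta> > 2 * \<eta> * measure_pmf.expectation P (\<lambda>C. real (cdeg C) * real (csize C))
                              / measure_pmf.expectation P (\<lambda>C. real (cdeg C))"
  shows "\<exists>\<zeta>>0. \<forall>\<^sub>F n in sequentially.
           measure_pmf.prob (hcm_exploration (H n) n)
             {disc. real (first_sizes_sum (H n) (nat \<lfloor>\<eta> * real n powr (2/3)\<rfloor>) disc) > \<delta> * real n powr (2/3)}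
           \<le> exp (- \<zeta> * real n powr (2/3) / real (hcm_smax (H n) n))"
proof -
  let ?\<nu> = "measure_pmf.expectation P (\<lambda>C. real (cdeg C))"
  have int_deg: "integrable (measure_pmf P) (\<lambda>C. real (cdeg C))"
    using con_i_int by (rule integrable_of_cube)
  have \<nu>: "?\<nu> > 0" using int_deg con_ii0 by (rule expectation_pos_of_prob_zero_lt_1)
  obtain D where D: "2 * \<eta> * measure_pmf.expectation P (\<lambda>C. real (cdeg C) * real (csize C)) / ?\<nu> < D" "D < \<delta>"
    using delta_eta dense by blast
  obtain K where K: "K > 0" and exponent: "\<forall>\<^sub>F n in sequentially.
      degree_budget (H n) n (nat \<lfloor>\<eta> * real n powr (2/3)\<rfloor>) K < card (hcm_hedges (H n) n)
    \<and> 2 * real (nat \<lfloor>\<eta> * real n powr (2/3)\<rfloor>) * (\<Sum>i<n. real (cdeg (H n i)) * real (csize (H n i)))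
        / (card (hcm_hedges (H n) n) - degree_budget (H n) n (nat \<lfloor>\<eta> * real n powr (2/3)\<rfloor>) K)
      \<le> D * real n powr (2/3)"
    using eventually_tail_exponent[OF eta \<nu> reg_iii eventually_emp_mean_gt[OF reg_i int_deg] con_i D(1)]
    by auto
  have "\<forall>\<^sub>F n in sequentially.
           measure_pmf.prob (hcm_exploration (H n) n)
             {disc. real (first_sizes_sum (H n) (nat \<lfloor>\<eta> * real n powr (2/3)\<rfloor>) disc) > \<delta> * real n powr (2/3)}
           \<le> exp (- (\<delta> - D) * real n powr (2/3) / real (hcm_smax (H n) n))"
    using exponent eventually_gt_at_top[of 0]
  proof eventually_elim
    case (elim n)
    let ?p = "real n powr (2/3)" and ?k = "nat \<lfloor>\<eta> * real n powr (2/3)\<rfloor>"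
    have "measure_pmf.prob (hcm_exploration (H n) n) {disc. real (first_sizes_sum (H n) ?k disc) > \<delta> * ?p}
            \<le> exp ((2 * real ?k * (\<Sum>i<n. real (cdeg (H n i)) * real (csize (H n i)))
                     / (card (hcm_hedges (H n) n) - degree_budget (H n) n ?k K) - \<delta> * ?p)
                   / real (hcm_smax (H n) n))"
      using comm even_tot elim by (intro hcm_exploration_tail_bound K) auto
    also have "\<dots> \<le> exp (- (\<delta> - D) * ?p / real (hcm_smax (H n) n))"
      using elim(1) by (intro exp_mono divide_right_mono) (simp_all add: algebra_simps)
    finally show ?case .
  qed
  then show ?thesis using D(2) by (intro exI[of _ "\<delta> - D"]) simp
qed

end
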